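(* For each $N$ let $\mathbf X^N=(\mathbf X^N(t))_{t\ge0}$ be a continuous-time Markov jump process on $\mathcal X^N$ with generator $\mathcal L^Nf(\bm x)=\sum_{i=1}^N\sum_{y\in\mathcal X}(f(\bm x^{i;y})-f(\bm x))\bm Q^N_{\bm x,\bm x^{i;y}}$. Then the laws of the empirical measures are tight in the Skorokhod topology; in particular, for every $x\in\mathcal X$ and $\varepsilon>0$, $$\lim_{\delta\to0}\limsup_{N\to\infty}\mathbb P\Big[\sup_{|t-s|\le\delta}\big|L^N_x(\mathbf X^N(t))-L^N_x(\mathbf X^N(s))\big|>\varepsilon\Big]=0.$$
   Context: $\mathcal X=\{1,\dots,d\}$ finite; $L^N(\bm x)=\frac1N\sum_i\delta_{x_i}$, $L^N_x(\bm x)$ its mass at $x$; $\mathcal P_N(\mathcal X)=L^N(\mathcal X^N)$; $\bm x^{i;y}$ is $\bm x$ with $x_i$ replaced by $y$. $K:\mathcal P(\mathcal X)\times\mathcal X\to\mathbb R$ with $K_x$ twice continuously differentiable; $U=\sum_x\mu_xK_x$, $H_x=\partial_{\mu_x}U$, $\pi_x\propto e^{-H_x}$. $\{A(\mu)\}$ irreducible symmetric nonnegative matrices, Lipschitz in $\mu$, and $A^N(\mu)$ irreducible symmetric nonnegative matrices with $A^N_{xy}\to A_{xy}$ uniformly on $\mathcal P(\mathcal X)$. For $\mu\in\mathcal P_N(\mathcal X)$, $\mu_x>0$, $y\ne x$: $Q^N_{xy}(\mu)=\exp(-\frac N2(U(\mu+\frac{\delta_y-\delta_x}N)-U(\mu)))A^N_{xy}(\mu)$,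 and $\bm Q^N_{\bm x,\bm x^{i;y}}=Q^N_{x_i,y}(L^N\bm x)$ for $y\ne x_i$ (terms with $y=x_i$ contribute nothing to $\mathcal L^N$). The initial distributions of $\mathbf X^N$ are arbitrary. *)

theory Defs
  imports "HOL-Probability.Probability"
begin

definition prob_vecs :: "(real ^ 'x::finite) set" where
  "prob_vecs = {\<mu>. (\<forall>x. 0 \<le> \<mu> $ x) \<and> (\<Sum>x\<in>UNIV. \<mu> $ x) = 1}"

definition configs :: "nat \<Rightarrow> ('x list) set" where
  "configs N = {xs. length xs = N}"

definition emp :: "nat \<Rightarrow> 'x::finite list \<Rightarrow> real ^ 'x" where
  "emp N xs = (\<chi> x. real (card {i. i < N \<and> xs ! i = x}) / real N)"

definition C2_on :: "(real ^ 'x::finite) set \<Rightarrow> (real ^ 'x \<Rightarrow> real) \<Rightarrow> bool" where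
  "C2_on S f \<longleftrightarrow> (\<exists>f' f''.
      (\<forall>\<mu>\<in>S. (f has_derivative blinfun_apply (f' \<mu>)) (at \<mu>)) \<and>
      (\<forall>\<mu>\<in>S. (f' has_derivative blinfun_apply (f'' \<mu>)) (at \<mu>)) \<and>
      continuous_on S f'')"

definition energy :: "('x::finite \<Rightarrow> real ^ 'x \<Rightarrow> real) \<Rightarrow> real ^ 'x \<Rightarrow> real" where
  "energy K \<mu> = (\<Sum>x\<in>UNIV. \<mu> $ x * K x \<mu>)"

definition nonneg_matrix :: "('x \<Rightarrow> 'x \<Rightarrow> real) \<Rightarrow> bool" where
  "nonneg_matrix A \<longleftrightarrow> (\<forall>x y. 0 \<le> A x y)"

definition symmetric_matrix :: "('x \<Rightarrow> 'x \<Rightarrow> real) \<Rightarrow> bool" where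
  "symmetric_matrix A \<longleftrightarrow> (\<forall>x y. A x y = A y x)"

definition irreducible_matrix :: "('x \<Rightarrow> 'x \<Rightarrow> real) \<Rightarrow> bool" where
  "irreducible_matrix A \<longleftrightarrow> (\<forall>x y. (x, y) \<in> {(a, b). 0 < A a b}\<^sup>*)"

definition rateQ :: "('x::finite \<Rightarrow> real ^ 'x \<Rightarrow> real) \<Rightarrow> (nat \<Rightarrow> real ^ 'x \<Rightarrow> 'x \<Rightarrow> 'x \<Rightarrow> real)
     \<Rightarrow> nat \<Rightarrow> real ^ 'x \<Rightarrow> 'x \<Rightarrow> 'x \<Rightarrow> real" where
  "rateQ K AN N \<mu> x y =
     exp (- (real N / 2) * (energy K (\<mu> + (axis y 1 - axis x 1) /\<^sub>R real N) - energy K \<mu>)) * AN N \<mu> x y"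

definition genL :: "('x::finite \<Rightarrow> real ^ 'x \<Rightarrow> real) \<Rightarrow> (nat \<Rightarrow> real ^ 'x \<Rightarrow> 'x \<Rightarrow> 'x \<Rightarrow> real)
     \<Rightarrow> nat \<Rightarrow> ('x list \<Rightarrow> real) \<Rightarrow> 'x list \<Rightarrow> real" where
  "genL K AN N f xs =
     (\<Sum>i<N. \<Sum>y\<in>UNIV. if y = xs ! i then 0
        else (f (xs[i := y]) - f xs) * rateQ K AN N (emp N xs) (xs ! i) y)"

definition gen_matrix :: "(('s \<Rightarrow> real) \<Rightarrow> 's \<Rightarrow> real) \<Rightarrow> 's \<Rightarrow> 's \<Rightarrow> real" where
  "gen_matrix L a b = L (\<lambda>z. if z = b then 1 else 0) a"

fun mpow :: "'s set \<Rightarrow> ('s \<Rightarrow> 's \<Rightarrow> real) \<Rightarrow> nat \<Rightarrow> 's \<Rightarrow> 's \<Rightarrow> real" where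
  "mpow S G 0 a b = (if a = b then 1 else 0)"
| "mpow S G (Suc n) a b = (\<Sum>c\<in>S. G a c * mpow S G n c b)"

definition trans_fun :: "'s set \<Rightarrow> ('s \<Rightarrow> 's \<Rightarrow> real) \<Rightarrow> real \<Rightarrow> 's \<Rightarrow> 's \<Rightarrow> real" where
  "trans_fun S G t a b = (\<Sum>n. t ^ n / fact n * mpow S G n a b)"

definition cadlag_step :: "(real \<Rightarrow> 's) \<Rightarrow> bool" where
  "cadlag_step p \<longleftrightarrow> (\<forall>t\<ge>0. (\<exists>e>0. \<forall>s\<in>{t..<t+e}. p s = p t) \<and>
                              (0 < t \<longrightarrow> (\<exists>e>0. \<exists>v. \<forall>s\<in>{t-e<..<t}. p s = v)))"

definition markov_jump_process ::
  "'a measure \<Rightarrow> 's set \<Rightarrow> ('s \<Rightarrow> 's \<Rightarrow> real) \<Rightarrow> (real \<Rightarrow> 'a \<Rightarrow> 's) \<Rightarrow> bool" where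
  "markov_jump_process M S G X \<longleftrightarrow>
     prob_space M \<and>
     (\<forall>t\<ge>0. \<forall>\<omega>\<in>space M. X t \<omega> \<in> S) \<and>
     (\<forall>t\<ge>0. X t \<in> measurable M (count_space UNIV)) \<and>
     (AE \<omega> in M. cadlag_step (\<lambda>t. X t \<omega>)) \<and>
     (\<forall>(n::nat) (ts::nat \<Rightarrow> real) (ss::nat \<Rightarrow> 's).
        0 \<le> ts 0 \<longrightarrow> (\<forall>k<n. ts k \<le> ts (Suc k)) \<longrightarrow>
        measure M {\<omega>\<in>space M. \<forall>k\<le>n. X (ts k) \<omega> = ss k} =
        measure M {\<omega>\<in>space M. X (ts 0) \<omega> = ss 0} *
        (\<Prod>k<n. trans_fun S G (ts (Suc k) - ts k) (ss k) (ss (Suc k))))"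

(* outer probability (coincides with the probability on measurable events) *)
definition outer_prob :: "'a measure \<Rightarrow> 'a set \<Rightarrow> real" where
  "outer_prob M A = Inf {measure M B | B. B \<in> sets M \<and> A \<inter> space M \<subseteq> B}"

end

theory Submission
  imports Defs
begin

(* Uniformization: if L bounds the exit rates of a finite generator G, then
   exp (t G) = e^(-L t) sum_k (L t)^k / k! P^k with the stochastic matrix P = I + G / L.
   For an observable phi that changes by at most one along each step of P this gives
   E |phi(X_t) - phi(X_s)| <= L h and E (phi(X_t) - phi(X_s))^2 <= L h + (L h)^2 for h = t - s,
   and, by the Markov property, E |D| |D'| <= L^2 h h' for increments D, D' over disjoint
   intervals. Chebyshev's inequality then bounds the probability that the total variation of
   phi(X) along a grid inside a time block of length 2 delta exceeds c by
   ((2 L delta)^2 + 2 L delta) / c^2, whatever the mesh of the grid. Since the paths are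
   right-continuous step functions, an oscillation larger than 2 c between times at most delta
   apart is seen on every fine enough dyadic grid inside two adjacent blocks, hence as a
   variation at least c inside one of about T / (2 delta) blocks.
   For the particle system, phi = N L^N_x changes by at most one per jump, and the rates Q^N are
   bounded uniformly in N (U is Lipschitz on the simplex and A^N is bounded), so L = O(N).
   With c = epsilon N / 2 the bound becomes O(T delta + delta^2) / epsilon^2 for all large N. *)

section \<open>Uniformization of a finite generator\<close>

locale finite_generator =
  fixes S :: "'s set" and G :: "'s \<Rightarrow> 's \<Rightarrow> real" and L :: real
  assumes finite_S: "finite S" and L_pos: "0 < L"
    and off_diagonal_nonneg: "\<And>a b. a \<in> S \<Longrightarrow> b \<in> S \<Longrightarrow> a \<noteq> b \<Longrightarrow> 0 \<le> G a b"
    and row_sum_zero: "\<And>a. a \<in> S \<Longrightarrow> (\<Sum>b\<in>S. G a b) = 0"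
    and exit_rate_le: "\<And>a. a \<in> S \<Longrightarrow> - G a a \<le> L"
begin

definition jump_kernel :: "'s \<Rightarrow> 's \<Rightarrow> real" where
  "jump_kernel a b = (if a = b then 1 else 0) + G a b / L"

definition unit_jumps :: "('s \<Rightarrow> real) \<Rightarrow> bool" where
  "unit_jumps \<phi> \<longleftrightarrow> (\<forall>a\<in>S. \<forall>b\<in>S. jump_kernel a b \<noteq> 0 \<longrightarrow> \<bar>\<phi> b - \<phi> a\<bar> \<le> 1)"

lemma jump_kernel_nonneg:
  assumes "a \<in> S" "b \<in> S"
  shows "0 \<le> jump_kernel a b"
proof (cases "a = b")
  case True
  have "-1 \<le> G a a / L" using exit_rate_le[OF assms(1)] L_pos by (simp add: field_simps)
  then show ?thesis using True by (simp add: jump_kernel_def)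
next
  case False
  then show ?thesis using off_diagonal_nonneg[OF assms] L_pos by (simp add: jump_kernel_def)
qed

lemma jump_kernel_row_sum: "a \<in> S \<Longrightarrow> (\<Sum>b\<in>S. jump_kernel a b) = 1"
  unfolding jump_kernel_def using finite_S
  by (simp add: sum.distrib sum_divide_distrib[symmetric] row_sum_zero)

lemma mpow_jump_kernel_nonneg: "a \<in> S \<Longrightarrow> b \<in> S \<Longrightarrow> 0 \<le> mpow S jump_kernel k a b"
  by (induction k arbitrary: a) (auto intro!: sum_nonneg mult_nonneg_nonneg jump_kernel_nonneg)

lemma mpow_jump_kernel_row_sum: "a \<in> S \<Longrightarrow> (\<Sum>b\<in>S. mpow S jump_kernel k a b) = 1"
proof (induction k arbitrary: a)
  case 0
  then show ?case using finite_S by simp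
next
  case (Suc k)
  have "(\<Sum>b\<in>S. mpow S jump_kernel (Suc k) a b)
      = (\<Sum>c\<in>S. jump_kernel a c * (\<Sum>b\<in>S. mpow S jump_kernel k c b))"
    by (simp add: sum_distrib_left) (rule sum.swap)
  also have "\<dots> = (\<Sum>c\<in>S. jump_kernel a c)" using Suc.IH by simp
  finally show ?case using jump_kernel_row_sum Suc.prems by simp
qed

lemma mpow_jump_kernel_le_1:
  assumes a: "a \<in> S" and b: "b \<in> S"
  shows "mpow S jump_kernel k a b \<le> 1"
proof -
  have "mpow S jump_kernel k a b \<le> (\<Sum>b\<in>S. mpow S jump_kernel k a b)"
    using finite_S b by (intro member_le_sum) (auto intro: mpow_jump_kernel_nonneg a)
  then show ?thesis using mpow_jump_kernel_row_sum[OF a] by simp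
qed

lemma mpow_jump_kernel_nonzero_imp_dist_le:
  assumes "unit_jumps \<phi>" "a \<in> S" "b \<in> S" "mpow S jump_kernel k a b \<noteq> 0"
  shows "\<bar>\<phi> b - \<phi> a\<bar> \<le> real k"
  using assms(2-)
proof (induction k arbitrary: a)
  case 0
  then show ?case by (simp split: if_splits)
next
  case (Suc k)
  then obtain c where c: "c \<in> S" "jump_kernel a c * mpow S jump_kernel k c b \<noteq> 0"
    by (auto elim: sum.not_neutral_contains_not_neutral)
  then have "\<bar>\<phi> c - \<phi> a\<bar> \<le> 1" "\<bar>\<phi> b - \<phi> c\<bar> \<le> real k"
    using assms(1) Suc by (auto simp: unit_jumps_def)
  then show ?case by simp
qed

end

lemma mpow_const_mult: "mpow S (\<lambda>a b. c * B a b) k a b = c ^ k * mpow S B k a b"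
  by (induction k arbitrary: a) (auto simp: sum_distrib_left mult_ac)

lemma binomial_weighted_sum_Suc:
  fixes f :: "nat \<Rightarrow> real"
  shows "(\<Sum>k\<le>n. real (n choose k) * q ^ (n - k) * f (Suc k)) +
         q * (\<Sum>k\<le>n. real (n choose k) * q ^ (n - k) * f k)
       = (\<Sum>k\<le>Suc n. real (Suc n choose k) * q ^ (Suc n - k) * f k)"
proof -
  have r: "(\<Sum>k\<le>Suc n. real (Suc n choose k) * q ^ (Suc n - k) * f k)
     = q ^ Suc n * f 0 + (\<Sum>j\<le>n. real (n choose j) * q ^ (n - j) * f (Suc j))
       + (\<Sum>j\<le>n. real (n choose Suc j) * q ^ (n - j) * f (Suc j))"
    by (subst sum.atMost_Suc_shift) (simp add: sum.distrib algebra_simps)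
  have "q * (\<Sum>k\<le>n. real (n choose k) * q ^ (n - k) * f k)
       = (\<Sum>k<Suc n. real (n choose k) * q ^ (Suc n - k) * f k)"
    by (simp add: sum_distrib_left lessThan_Suc_atMost Suc_diff_le algebra_simps)
  also have "\<dots> = q ^ Suc n * f 0 + (\<Sum>j<n. real (n choose Suc j) * q ^ (n - j) * f (Suc j))"
    by (subst sum.lessThan_Suc_shift) simp
  also have "(\<Sum>j<n. real (n choose Suc j) * q ^ (n - j) * f (Suc j))
      = (\<Sum>j\<le>n. real (n choose Suc j) * q ^ (n - j) * f (Suc j))"
    by (simp add: lessThan_Suc_atMost[symmetric])
  finally show ?thesis using r by simp
qed

lemma mpow_add_diagonal:
  assumes G: "\<And>a c. a \<in> S \<Longrightarrow> c \<in> S \<Longrightarrow> G a c = B a c + q * (if a = c then 1 else 0)"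
    and S: "finite S" and a: "a \<in> S"
  shows "mpow S G n a b = (\<Sum>k\<le>n. real (n choose k) * q ^ (n - k) * mpow S B k a b)"
  using a
proof (induction n arbitrary: a)
  case 0
  then show ?case by simp
next
  case (Suc n)
  let ?g = "\<lambda>c. (\<Sum>k\<le>n. real (n choose k) * q ^ (n - k) * mpow S B k c b)"
  have "mpow S G (Suc n) a b = (\<Sum>c\<in>S. B a c * ?g c + (if a = c then q * ?g c else 0))"
    using Suc by (auto intro!: sum.cong simp: G algebra_simps)
  also have "\<dots> = (\<Sum>c\<in>S. B a c * ?g c) + q * ?g a"
    using S Suc.prems by (simp add: sum.distrib)
  also have "(\<Sum>c\<in>S. B a c * ?g c) = (\<Sum>k\<le>n. real (n choose k) * q ^ (n - k) * mpow S B (Suc k) a b)"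
    by (simp add: sum_distrib_left mult_ac) (rule sum.swap)
  finally show ?case using binomial_weighted_sum_Suc[of n q "\<lambda>k. mpow S B k a b"] by simp
qed

lemma binomial_exp_term_split:
  fixes t L P :: real
  assumes "k \<le> n"
  shows "t ^ n / fact n * (real (n choose k) * (- L) ^ (n - k) * (L ^ k * P))
       = ((L * t) ^ k / fact k * P) * ((- L) ^ (n - k) * t ^ (n - k) / fact (n - k))"
proof -
  have c: "real (n choose k) = fact n / (fact k * fact (n - k))"
    using binomial_fact[OF assms] by simp
  have tn: "t ^ n = t ^ k * t ^ (n - k)"
    using assms by (simp add: power_add[symmetric])
  show ?thesis unfolding c tn by (simp add: field_simps power_mult_distrib)
qed

lemma exp_sums_real: "(\<lambda>n. (x::real) ^ n / fact n) sums exp x"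
  using exp_converges[of x] by (simp add: divide_simps)

lemma summable_abs_exp_series: "summable (\<lambda>k. \<bar>x::real\<bar> ^ k / fact k)"
  using summable_exp[of "\<bar>x\<bar>"] by (simp add: field_simps)

lemma poisson_first_moment_sums: "(\<lambda>k. (x::real) ^ k / fact k * real k) sums (x * exp x)"
proof -
  have "(\<lambda>n. x ^ Suc n / fact (Suc n) * real (Suc n)) = (\<lambda>n. x * (x ^ n / fact n))"
    by (simp add: fact_Suc field_simps del: of_nat_Suc)
  moreover have "(\<lambda>n. x * (x ^ n / fact n)) sums (x * exp x)"
    by (rule sums_mult[OF exp_sums_real])
  ultimately show ?thesis using sums_Suc_iff[of "\<lambda>k. x ^ k / fact k * real k"] by simp
qed

lemma poisson_second_moment_sums:
  "(\<lambda>k. (x::real) ^ k / fact k * (real k)^2) sums ((x^2 + x) * exp x)"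
proof -
  have "(\<lambda>n. x ^ Suc n / fact (Suc n) * (real (Suc n))^2)
      = (\<lambda>n. x * (x ^ n / fact n * real n) + x * (x ^ n / fact n))"
    by (simp add: fact_Suc field_simps power2_eq_square del: of_nat_Suc) (simp add: algebra_simps)
  moreover have "(\<lambda>n. x * (x ^ n / fact n * real n) + x * (x ^ n / fact n))
      sums (x * (x * exp x) + x * exp x)"
    by (intro sums_add sums_mult poisson_first_moment_sums exp_sums_real)
  ultimately show ?thesis
    using sums_Suc_iff[of "\<lambda>k. x ^ k / fact k * (real k)^2"]
    by (simp add: algebra_simps power2_eq_square)
qed

context finite_generator
begin

lemma summable_norm_uniformization_series:
  assumes a: "a \<in> S" and b: "b \<in> S"
  shows "summable (\<lambda>k. norm ((L * t) ^ k / fact k * mpow S jump_kernel k a b))"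
proof (rule summable_comparison_test[OF _ summable_abs_exp_series[of "L * t"]])
  have "\<bar>(L * t) ^ n\<bar> / fact n * \<bar>mpow S jump_kernel n a b\<bar> \<le> \<bar>(L * t) ^ n\<bar> / fact n" for n
    using mpow_jump_kernel_le_1[OF a b] mpow_jump_kernel_nonneg[OF a b]
    by (intro mult_left_le) auto
  then show "\<exists>N. \<forall>n\<ge>N. norm (norm ((L * t) ^ n / fact n * mpow S jump_kernel n a b))
      \<le> \<bar>L * t\<bar> ^ n / fact n"
    by (simp add: abs_mult power_abs)
qed

lemma summable_uniformization_series:
  "a \<in> S \<Longrightarrow> b \<in> S \<Longrightarrow> summable (\<lambda>k. (L * t) ^ k / fact k * mpow S jump_kernel k a b)"
  by (rule summable_norm_cancel, rule summable_norm_uniformization_series)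

lemma trans_fun_uniformization:
  assumes a: "a \<in> S" and b: "b \<in> S"
  shows "trans_fun S G t a b
       = exp (- L * t) * (\<Sum>k. (L * t) ^ k / fact k * mpow S jump_kernel k a b)"
proof -
  have G: "G a' c = L * jump_kernel a' c + (- L) * (if a' = c then 1 else 0)" for a' c
    unfolding jump_kernel_def using L_pos by (simp add: field_simps)
  have mpow_G: "mpow S G n a b
      = (\<Sum>k\<le>n. real (n choose k) * (- L) ^ (n - k) * (L ^ k * mpow S jump_kernel k a b))" for n
    using mpow_add_diagonal[OF G finite_S a, of n b] by (simp only: mpow_const_mult)
  define P where "P k = (L * t) ^ k / fact k * mpow S jump_kernel k a b" for k
  define E where "E j = (- L) ^ j * t ^ j / fact j" for j
  have E: "E = (\<lambda>j. (- L * t) ^ j / fact j)"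
    unfolding E_def by (rule ext) (simp only: power_mult_distrib)
  have summable_P: "summable (\<lambda>k. norm (P k))"
    unfolding P_def using summable_norm_uniformization_series[OF a b] .
  have summable_E: "summable (\<lambda>k. norm (E k))"
    unfolding E real_norm_def using summable_abs_exp_series[of "- L * t"]
    by (simp add: abs_divide power_abs)
  have "t ^ n / fact n * mpow S G n a b = (\<Sum>k\<le>n. P k * E (n - k))" for n
    unfolding mpow_G sum_distrib_left P_def E_def
    by (intro sum.cong refl) (rule binomial_exp_term_split, simp)
  then have "trans_fun S G t a b = (\<Sum>n. \<Sum>k\<le>n. P k * E (n - k))"
    unfolding trans_fun_def by simp
  also have "\<dots> = (\<Sum>k. P k) * (\<Sum>k. E k)"
    using Cauchy_product[OF summable_P summable_E] by simp
  also have "(\<Sum>k. E k) = exp (- L * t)"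
    unfolding E using exp_sums_real[of "- L * t"] by (rule sums_unique[symmetric])
  finally show ?thesis unfolding P_def by simp
qed

lemma trans_fun_nonneg:
  assumes a: "a \<in> S" and b: "b \<in> S" and t: "0 \<le> t"
  shows "0 \<le> trans_fun S G t a b"
proof -
  have "0 \<le> (\<Sum>k. (L * t) ^ k / fact k * mpow S jump_kernel k a b)"
    using L_pos t mpow_jump_kernel_nonneg[OF a b]
    by (intro suminf_nonneg summable_uniformization_series a b) simp
  then show ?thesis unfolding trans_fun_uniformization[OF a b] by simp
qed

lemma trans_fun_row_sum:
  assumes a: "a \<in> S"
  shows "(\<Sum>b\<in>S. trans_fun S G t a b) = 1"
proof -
  have "(\<Sum>b\<in>S. \<Sum>k. (L * t) ^ k / fact k * mpow S jump_kernel k a b)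
      = (\<Sum>k. \<Sum>b\<in>S. (L * t) ^ k / fact k * mpow S jump_kernel k a b)"
    by (rule suminf_sum[symmetric]) (use summable_uniformization_series a in auto)
  also have "\<dots> = (\<Sum>k. (L * t) ^ k / fact k)"
    by (intro suminf_cong, subst sum_distrib_left[symmetric]) (simp add: mpow_jump_kernel_row_sum a)
  also have "\<dots> = exp (L * t)"
    using exp_sums_real[of "L * t"] by (rule sums_unique[symmetric])
  finally show ?thesis
    by (simp add: trans_fun_uniformization a sum_distrib_left[symmetric] mult_exp_exp)
qed

lemma trans_fun_weighted_sum_le:
  assumes a: "a \<in> S" and t: "0 \<le> t"
    and w: "\<And>b. b \<in> S \<Longrightarrow> 0 \<le> w b"
    and w_le: "\<And>k b. b \<in> S \<Longrightarrow> mpow S jump_kernel k a b \<noteq> 0 \<Longrightarrow> w b \<le> c k"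
    and c: "(\<lambda>k. (L * t) ^ k / fact k * c k) sums \<sigma>"
  shows "(\<Sum>b\<in>S. trans_fun S G t a b * w b) \<le> exp (- L * t) * \<sigma>"
proof -
  let ?u = "\<lambda>k b. (L * t) ^ k / fact k * mpow S jump_kernel k a b * w b"
  have summable_u: "summable (\<lambda>k. ?u k b)" if "b \<in> S" for b
    by (rule summable_mult2, rule summable_uniformization_series[OF a that])
  have "(\<Sum>b\<in>S. trans_fun S G t a b * w b) = exp (- L * t) * (\<Sum>b\<in>S. \<Sum>k. ?u k b)"
    using suminf_mult2[OF summable_uniformization_series[OF a], where c="w _"]
    by (simp add: trans_fun_uniformization a sum_distrib_left mult.assoc)
  also have "(\<Sum>b\<in>S. \<Sum>k. ?u k b) = (\<Sum>k. \<Sum>b\<in>S. ?u k b)"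
    by (rule suminf_sum[symmetric], rule summable_u)
  also have "\<dots> \<le> \<sigma>"
  proof -
    have le: "(\<Sum>b\<in>S. ?u k b) \<le> (L * t) ^ k / fact k * c k" for k
    proof -
      have "mpow S jump_kernel k a b * w b \<le> mpow S jump_kernel k a b * c k" if b: "b \<in> S" for b
        using w_le[OF b] mpow_jump_kernel_nonneg[OF a b]
        by (cases "mpow S jump_kernel k a b = 0") (auto intro!: mult_left_mono)
      then have "(\<Sum>b\<in>S. mpow S jump_kernel k a b * w b) \<le> c k"
        using sum_mono[of S] mpow_jump_kernel_row_sum[OF a]
        by (metis (no_types, lifting) mult_1 sum_distrib_right)
      then have "(L * t) ^ k / fact k * (\<Sum>b\<in>S. mpow S jump_kernel k a b * w b)
          \<le> (L * t) ^ k / fact k * c k"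
        using L_pos t by (intro mult_left_mono) auto
      then show ?thesis by (simp add: sum_distrib_left mult.assoc)
    qed
    have "summable (\<lambda>k. \<Sum>b\<in>S. ?u k b)" by (rule summable_sum, rule summable_u)
    from suminf_le[OF le this sums_summable[OF c]] show ?thesis by (simp add: sums_unique[OF c])
  qed
  finally show ?thesis by (simp add: mult_left_mono)
qed

lemma trans_fun_abs_increment_le:
  assumes "unit_jumps \<phi>" "a \<in> S" "0 \<le> t"
  shows "(\<Sum>b\<in>S. trans_fun S G t a b * \<bar>\<phi> b - \<phi> a\<bar>) \<le> L * t"
proof -
  have "(\<Sum>b\<in>S. trans_fun S G t a b * \<bar>\<phi> b - \<phi> a\<bar>) \<le> exp (- L * t) * (L * t * exp (L * t))"
    by (rule trans_fun_weighted_sum_le[OF assms(2,3) _ _ poisson_first_moment_sums])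
       (use mpow_jump_kernel_nonzero_imp_dist_le[OF assms(1,2)] in auto)
  also have "exp (- L * t) * (L * t * exp (L * t)) = L * t" by (simp add: exp_minus field_simps)
  finally show ?thesis .
qed

lemma trans_fun_sq_increment_le:
  assumes "unit_jumps \<phi>" "a \<in> S" "0 \<le> t"
  shows "(\<Sum>b\<in>S. trans_fun S G t a b * (\<phi> b - \<phi> a)^2) \<le> L * t + (L * t)^2"
proof -
  have "(\<Sum>b\<in>S. trans_fun S G t a b * (\<phi> b - \<phi> a)^2)
      \<le> exp (- L * t) * (((L * t)^2 + L * t) * exp (L * t))"
  proof (rule trans_fun_weighted_sum_le[OF assms(2,3) _ _ poisson_second_moment_sums])
    fix k b assume "b \<in> S" "mpow S jump_kernel k a b \<noteq> 0"
    then have "\<bar>\<phi> b - \<phi> a\<bar> \<le> real k"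
      using mpow_jump_kernel_nonzero_imp_dist_le[OF assms(1,2)] by auto
    then show "(\<phi> b - \<phi> a)^2 \<le> (real k)^2"
      by (metis abs_ge_zero power2_abs power_mono)
  qed auto
  also have "exp (- L * t) * (((L * t)^2 + L * t) * exp (L * t)) = L * t + (L * t)^2"
    by (simp add: exp_minus field_simps)
  finally show ?thesis .
qed

lemma trans_fun_increment_product_le:
  assumes \<phi>: "unit_jumps \<phi>" and a: "a \<in> S" and h: "0 \<le> h1" "0 \<le> h2" "0 \<le> h3"
  shows "(\<Sum>b\<in>S. trans_fun S G h1 a b * \<bar>\<phi> b - \<phi> a\<bar>
           * (\<Sum>c\<in>S. trans_fun S G h2 b c * (\<Sum>e\<in>S. trans_fun S G h3 c e * \<bar>\<phi> e - \<phi> c\<bar>)))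
       \<le> (L * h1) * (L * h3)"
proof -
  have inner: "(\<Sum>c\<in>S. trans_fun S G h2 b c * (\<Sum>e\<in>S. trans_fun S G h3 c e * \<bar>\<phi> e - \<phi> c\<bar>))
      \<le> L * h3" if b: "b \<in> S" for b
  proof -
    have "(\<Sum>c\<in>S. trans_fun S G h2 b c * (\<Sum>e\<in>S. trans_fun S G h3 c e * \<bar>\<phi> e - \<phi> c\<bar>))
        \<le> (\<Sum>c\<in>S. trans_fun S G h2 b c * (L * h3))"
      by (intro sum_mono mult_left_mono trans_fun_abs_increment_le \<phi> trans_fun_nonneg b h)
    also have "\<dots> = L * h3" using trans_fun_row_sum[OF b] by (simp add: sum_distrib_right[symmetric])
    finally show ?thesis .
  qed
  have "(\<Sum>b\<in>S. trans_fun S G h1 a b * \<bar>\<phi> b - \<phi> a\<bar>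
           * (\<Sum>c\<in>S. trans_fun S G h2 b c * (\<Sum>e\<in>S. trans_fun S G h3 c e * \<bar>\<phi> e - \<phi> c\<bar>)))
      \<le> (\<Sum>b\<in>S. trans_fun S G h1 a b * \<bar>\<phi> b - \<phi> a\<bar> * (L * h3))"
    by (intro sum_mono mult_left_mono inner mult_nonneg_nonneg trans_fun_nonneg a h) auto
  also have "\<dots> = (\<Sum>b\<in>S. trans_fun S G h1 a b * \<bar>\<phi> b - \<phi> a\<bar>) * (L * h3)"
    by (simp add: sum_distrib_right)
  also have "\<dots> \<le> (L * h1) * (L * h3)"
    using L_pos h by (intro mult_right_mono trans_fun_abs_increment_le \<phi> a) auto
  finally show ?thesis .
qed

end

section \<open>Increments of a Markov jump process\<close>

lemma (in prob_space) finite_range_integral: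
  fixes Y :: "'a \<Rightarrow> 'v" and g :: "'v \<Rightarrow> real"
  assumes V: "finite V" and Y: "\<And>\<omega>. \<omega> \<in> space M \<Longrightarrow> Y \<omega> \<in> V"
    and sets_Y: "\<And>v. v \<in> V \<Longrightarrow> {\<omega>\<in>space M. Y \<omega> = v} \<in> sets M"
  shows "integrable M (\<lambda>\<omega>. g (Y \<omega>))"
    and "(\<integral>\<omega>. g (Y \<omega>) \<partial>M) = (\<Sum>v\<in>V. g v * prob {\<omega>\<in>space M. Y \<omega> = v})"
proof -
  have g_Y: "g (Y \<omega>) = (\<Sum>v\<in>V. g v * indicator {\<omega>\<in>space M. Y \<omega> = v} \<omega>)"
    if \<omega>: "\<omega> \<in> space M" for \<omega>
  proof -
    have "(\<Sum>v\<in>V. g v * indicator {\<omega>\<in>space M. Y \<omega> = v} \<omega>) = (\<Sum>v\<in>V. if Y \<omega> = v then g v else 0)"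
      by (intro sum.cong refl) (auto simp: indicator_def \<omega>)
    also have "\<dots> = g (Y \<omega>)" using V Y[OF \<omega>] by simp
    finally show ?thesis by simp
  qed
  have integrable_level: "integrable M (\<lambda>\<omega>. g v * indicator {\<omega>\<in>space M. Y \<omega> = v} \<omega>)"
    if "v \<in> V" for v
    using emeasure_finite sets_Y[OF that] by (simp add: less_top[symmetric])
  have "integrable M (\<lambda>\<omega>. g (Y \<omega>))
      \<longleftrightarrow> integrable M (\<lambda>\<omega>. \<Sum>v\<in>V. g v * indicator {\<omega>\<in>space M. Y \<omega> = v} \<omega>)"
    by (rule Bochner_Integration.integrable_cong) (simp_all add: g_Y)
  then show "integrable M (\<lambda>\<omega>. g (Y \<omega>))"
    using Bochner_Integration.integrable_sum[OF integrable_level] by simp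
  have "(\<integral>\<omega>. g (Y \<omega>) \<partial>M) = (\<integral>\<omega>. (\<Sum>v\<in>V. g v * indicator {\<omega>\<in>space M. Y \<omega> = v} \<omega>) \<partial>M)"
    by (rule Bochner_Integration.integral_cong) (simp_all add: g_Y)
  also have "\<dots> = (\<Sum>v\<in>V. g v * prob {\<omega>\<in>space M. Y \<omega> = v})"
    by (subst Bochner_Integration.integral_sum[OF integrable_level]) (auto simp: Int_absorb2)
  finally show "(\<integral>\<omega>. g (Y \<omega>) \<partial>M) = (\<Sum>v\<in>V. g v * prob {\<omega>\<in>space M. Y \<omega> = v})" .
qed

locale markov_jump_chain = finite_generator S G L for S :: "'s set" and G L +
  fixes M :: "'a measure" and X :: "real \<Rightarrow> 'a \<Rightarrow> 's"
  assumes jump_process: "markov_jump_process M S G X"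
begin

sublocale P: prob_space M
  using jump_process by (simp add: markov_jump_process_def)

lemma state_in_S: "0 \<le> t \<Longrightarrow> \<omega> \<in> space M \<Longrightarrow> X t \<omega> \<in> S"
  using jump_process by (simp add: markov_jump_process_def)

lemma AE_cadlag_step: "AE \<omega> in M. cadlag_step (\<lambda>t. X t \<omega>)"
  using jump_process by (simp add: markov_jump_process_def)

lemma measurable_observable: "0 \<le> t \<Longrightarrow> (\<lambda>\<omega>. f (X t \<omega>)) \<in> borel_measurable M"
  using jump_process measurable_compose[of "X t" M "count_space UNIV" f borel]
  by (simp add: markov_jump_process_def measurable_count_space_eq1)

lemma sets_state_eq:
  assumes "0 \<le> t"
  shows "{\<omega>\<in>space M. X t \<omega> = a} \<in> sets M"
proof -
  have "X t -` {a} \<inter> space M \<in> sets M"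
    using jump_process assms measurable_sets[of "X t" M "count_space UNIV" "{a}"]
    by (simp add: markov_jump_process_def)
  moreover have "X t -` {a} \<inter> space M = {\<omega>\<in>space M. X t \<omega> = a}" by auto
  ultimately show ?thesis by simp
qed

lemma state_distribution_sum: "0 \<le> t \<Longrightarrow> (\<Sum>a\<in>S. measure M {\<omega>\<in>space M. X t \<omega> = a}) = 1"
  using P.finite_range_integral(2)[OF finite_S state_in_S sets_state_eq, of t "\<lambda>_. 1"]
  by (simp add: P.prob_space)

lemma fidi_two_times:
  assumes "0 \<le> t0" "t0 \<le> t1"
  shows "measure M {\<omega>\<in>space M. X t0 \<omega> = a \<and> X t1 \<omega> = b}
       = measure M {\<omega>\<in>space M. X t0 \<omega> = a} * trans_fun S G (t1 - t0) a b"
proof -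
  have "{\<omega>\<in>space M. X t0 \<omega> = a \<and> X t1 \<omega> = b} = {\<omega>\<in>space M. \<forall>k\<le>1. X ([t0, t1] ! k) \<omega> = [a, b] ! k}"
    by (auto simp: le_Suc_eq)
  then show ?thesis
    using jump_process assms unfolding markov_jump_process_def by simp
qed

lemma fidi_four_times:
  assumes "0 \<le> t0" "t0 \<le> t1" "t1 \<le> t2" "t2 \<le> t3"
  shows "measure M {\<omega>\<in>space M. X t0 \<omega> = a \<and> X t1 \<omega> = b \<and> X t2 \<omega> = c \<and> X t3 \<omega> = e}
       = measure M {\<omega>\<in>space M. X t0 \<omega> = a} * trans_fun S G (t1 - t0) a b
         * trans_fun S G (t2 - t1) b c * trans_fun S G (t3 - t2) c e"
proof -
  let ?ts = "[t0, t1, t2, t3]" and ?ss = "[a, b, c, e]"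
  have "{\<omega>\<in>space M. X t0 \<omega> = a \<and> X t1 \<omega> = b \<and> X t2 \<omega> = c \<and> X t3 \<omega> = e}
      = {\<omega>\<in>space M. \<forall>k\<le>3. X (?ts ! k) \<omega> = ?ss ! k}"
    by (auto simp: le_Suc_eq numeral_3_eq_3)
  moreover have "\<forall>k<3. ?ts ! k \<le> ?ts ! Suc k"
    using assms by (auto simp: less_Suc_eq numeral_3_eq_3)
  ultimately show ?thesis
    using jump_process assms(1) unfolding markov_jump_process_def
    by (simp add: numeral_3_eq_3 mult.assoc)
qed

end

locale unit_jump_observable = markov_jump_chain S G L M X
  for S :: "'s set" and G L and M :: "'a measure" and X +
  fixes \<phi> :: "'s \<Rightarrow> real"
  assumes unit_jumps: "unit_jumps \<phi>"
begin

lemma integrable_increment_product: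
  assumes t: "0 \<le> t0" "0 \<le> t1" "0 \<le> t2" "0 \<le> t3"
  shows "integrable M (\<lambda>\<omega>. \<bar>\<phi> (X t1 \<omega>) - \<phi> (X t0 \<omega>)\<bar> * \<bar>\<phi> (X t3 \<omega>) - \<phi> (X t2 \<omega>)\<bar>)"
proof -
  let ?Y = "\<lambda>\<omega>. (X t0 \<omega>, X t1 \<omega>, X t2 \<omega>, X t3 \<omega>)"
  have "integrable M (\<lambda>\<omega>. (\<lambda>(a, b, c, e). \<bar>\<phi> b - \<phi> a\<bar> * \<bar>\<phi> e - \<phi> c\<bar>) (?Y \<omega>))"
  proof (rule P.finite_range_integral(1)[where Y = ?Y and V = "S \<times> S \<times> S \<times> S"])
    show "finite (S \<times> S \<times> S \<times> S)" using finite_S by simp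
    show "?Y \<omega> \<in> S \<times> S \<times> S \<times> S" if "\<omega> \<in> space M" for \<omega>
      using state_in_S that t by auto
    show "{\<omega>\<in>space M. ?Y \<omega> = v} \<in> sets M" for v
      by (cases v rule: prod_cases4) (simp only: prod.inject, intro sets.sets_Collect_conj sets_state_eq t)
  qed
  then show ?thesis by simp
qed

lemma disjoint_increments_product_le:
  assumes t: "0 \<le> t0" "t0 \<le> t1" "t1 \<le> t2" "t2 \<le> t3"
  shows "(\<integral>\<omega>. \<bar>\<phi> (X t1 \<omega>) - \<phi> (X t0 \<omega>)\<bar> * \<bar>\<phi> (X t3 \<omega>) - \<phi> (X t2 \<omega>)\<bar> \<partial>M)
       \<le> (L * (t1 - t0)) * (L * (t3 - t2))"
proof -
  let ?Y = "\<lambda>\<omega>. (X t0 \<omega>, X t1 \<omega>, X t2 \<omega>, X t3 \<omega>)"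
  let ?P1 = "trans_fun S G (t1 - t0)" and ?P2 = "trans_fun S G (t2 - t1)"
    and ?P3 = "trans_fun S G (t3 - t2)"
  define p where "p a = measure M {\<omega>\<in>space M. X t0 \<omega> = a}" for a
  have tt: "0 \<le> t1" "0 \<le> t2" "0 \<le> t3" "0 \<le> t1 - t0" "0 \<le> t2 - t1" "0 \<le> t3 - t2"
    using t by auto
  have "(\<integral>\<omega>. \<bar>\<phi> (X t1 \<omega>) - \<phi> (X t0 \<omega>)\<bar> * \<bar>\<phi> (X t3 \<omega>) - \<phi> (X t2 \<omega>)\<bar> \<partial>M)
      = (\<integral>\<omega>. (\<lambda>(a, b, c, e). \<bar>\<phi> b - \<phi> a\<bar> * \<bar>\<phi> e - \<phi> c\<bar>) (?Y \<omega>) \<partial>M)"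
    by simp
  also have "\<dots> = (\<Sum>v\<in>S \<times> S \<times> S \<times> S. (\<lambda>(a, b, c, e). \<bar>\<phi> b - \<phi> a\<bar> * \<bar>\<phi> e - \<phi> c\<bar>) v
      * measure M {\<omega>\<in>space M. ?Y \<omega> = v})"
  proof (rule P.finite_range_integral(2))
    show "finite (S \<times> S \<times> S \<times> S)" using finite_S by simp
    show "?Y \<omega> \<in> S \<times> S \<times> S \<times> S" if "\<omega> \<in> space M" for \<omega>
      using state_in_S that t tt by auto
    show "{\<omega>\<in>space M. ?Y \<omega> = v} \<in> sets M" for v
      by (cases v rule: prod_cases4) (simp only: prod.inject, intro sets.sets_Collect_conj sets_state_eq t tt)
  qed
  also have "\<dots> = (\<Sum>a\<in>S. p a * (\<Sum>b\<in>S. ?P1 a b * \<bar>\<phi> b - \<phi> a\<bar>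
      * (\<Sum>c\<in>S. ?P2 b c * (\<Sum>e\<in>S. ?P3 c e * \<bar>\<phi> e - \<phi> c\<bar>))))"
    unfolding sum.cartesian_product' p_def
    by (simp add: fidi_four_times[OF t] sum_distrib_left mult_ac)
  also have "\<dots> \<le> (\<Sum>a\<in>S. p a * ((L * (t1 - t0)) * (L * (t3 - t2))))"
    by (intro sum_mono mult_left_mono trans_fun_increment_product_le unit_jumps tt) (auto simp: p_def)
  also have "\<dots> = (L * (t1 - t0)) * (L * (t3 - t2))"
    using state_distribution_sum[OF t(1)] by (simp add: p_def sum_distrib_right[symmetric])
  finally show ?thesis .
qed

lemma increment_square_le:
  assumes t: "0 \<le> t0" "t0 \<le> t1"
  shows "(\<integral>\<omega>. \<bar>\<phi> (X t1 \<omega>) - \<phi> (X t0 \<omega>)\<bar> * \<bar>\<phi> (X t1 \<omega>) - \<phi> (X t0 \<omega>)\<bar> \<partial>M)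
       \<le> L * (t1 - t0) + (L * (t1 - t0))^2"
proof -
  let ?Y = "\<lambda>\<omega>. (X t0 \<omega>, X t1 \<omega>)"
  define p where "p a = measure M {\<omega>\<in>space M. X t0 \<omega> = a}" for a
  define m where "m = L * (t1 - t0) + (L * (t1 - t0))^2"
  have tt: "0 \<le> t1" "0 \<le> t1 - t0" using t by auto
  have "(\<integral>\<omega>. \<bar>\<phi> (X t1 \<omega>) - \<phi> (X t0 \<omega>)\<bar> * \<bar>\<phi> (X t1 \<omega>) - \<phi> (X t0 \<omega>)\<bar> \<partial>M)
      = (\<integral>\<omega>. (\<lambda>(a, b). (\<phi> b - \<phi> a)^2) (?Y \<omega>) \<partial>M)"
    by (simp add: power2_eq_square abs_mult_self_eq)
  also have "\<dots> = (\<Sum>v\<in>S \<times> S. (\<lambda>(a, b). (\<phi> b - \<phi> a)^2) v * measure M {\<omega>\<in>space M. ?Y \<omega> = v})"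
  proof (rule P.finite_range_integral(2))
    show "finite (S \<times> S)" using finite_S by simp
    show "?Y \<omega> \<in> S \<times> S" if "\<omega> \<in> space M" for \<omega> using state_in_S that t tt by auto
    show "{\<omega>\<in>space M. ?Y \<omega> = v} \<in> sets M" for v
      by (cases v) (simp only: prod.inject, intro sets.sets_Collect_conj sets_state_eq t tt)
  qed
  also have "\<dots> = (\<Sum>a\<in>S. p a * (\<Sum>b\<in>S. trans_fun S G (t1 - t0) a b * (\<phi> b - \<phi> a)^2))"
    unfolding sum.cartesian_product' p_def
    by (simp add: fidi_two_times[OF t] sum_distrib_left mult_ac)
  also have "\<dots> \<le> (\<Sum>a\<in>S. p a * m)"
    unfolding m_def
    by (intro sum_mono mult_left_mono trans_fun_sq_increment_le unit_jumps tt) (auto simp: p_def)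
  also have "\<dots> = m"
    using state_distribution_sum[OF t(1)] by (simp add: p_def sum_distrib_right[symmetric])
  finally show ?thesis unfolding m_def .
qed

definition grid_increment :: "real \<Rightarrow> nat \<Rightarrow> 'a \<Rightarrow> real" where
  "grid_increment h j \<omega> = \<bar>\<phi> (X (real (Suc j) * h) \<omega>) - \<phi> (X (real j * h) \<omega>)\<bar>"

lemma measurable_grid_increment: "0 \<le> h \<Longrightarrow> grid_increment h j \<in> borel_measurable M"
  unfolding grid_increment_def
  by (intro borel_measurable_abs borel_measurable_diff measurable_observable) auto

lemma integrable_grid_increment_product:
  "0 \<le> h \<Longrightarrow> integrable M (\<lambda>\<omega>. grid_increment h j \<omega> * grid_increment h l \<omega>)"
  unfolding grid_increment_def by (rule integrable_increment_product) auto

lemma grid_increment_product_integral_le: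
  assumes h: "0 \<le> h"
  shows "(\<integral>\<omega>. grid_increment h j \<omega> * grid_increment h l \<omega> \<partial>M)
       \<le> (L * h)^2 + (if j = l then L * h else 0)"
proof -
  have distinct: "(\<integral>\<omega>. grid_increment h j \<omega> * grid_increment h l \<omega> \<partial>M) \<le> (L * h)^2"
    if "j < l" for j l
  proof -
    have "real (Suc j) * h \<le> real l * h" using that h by (intro mult_right_mono) auto
    then have "(\<integral>\<omega>. grid_increment h j \<omega> * grid_increment h l \<omega> \<partial>M)
        \<le> (L * (real (Suc j) * h - real j * h)) * (L * (real (Suc l) * h - real l * h))"
      unfolding grid_increment_def using h
      by (intro disjoint_increments_product_le) (auto intro: mult_right_mono)
    also have "\<dots> = (L * h)^2" by (simp add: algebra_simps power2_eq_square)
    finally show ?thesis .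
  qed
  show ?thesis
  proof (cases j l rule: linorder_cases)
    case less
    then show ?thesis using distinct[OF less] by simp
  next
    case greater
    then show ?thesis using distinct[OF greater] by (simp add: mult.commute)
  next
    case equal
    have "(\<integral>\<omega>. grid_increment h j \<omega> * grid_increment h j \<omega> \<partial>M)
        \<le> L * (real (Suc j) * h - real j * h) + (L * (real (Suc j) * h - real j * h))^2"
      unfolding grid_increment_def using h
      by (intro increment_square_le) (auto intro: mult_right_mono)
    then show ?thesis using equal by (simp add: algebra_simps)
  qed
qed

lemma grid_variation_second_moment_le:
  assumes J: "finite J" and h: "0 \<le> h"
  shows "(\<integral>\<omega>. (\<Sum>j\<in>J. grid_increment h j \<omega>)^2 \<partial>M)
       \<le> (real (card J) * (L * h))^2 + real (card J) * (L * h)"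
proof -
  have "(\<integral>\<omega>. (\<Sum>j\<in>J. grid_increment h j \<omega>)^2 \<partial>M)
      = (\<Sum>j\<in>J. \<Sum>l\<in>J. (\<integral>\<omega>. grid_increment h j \<omega> * grid_increment h l \<omega> \<partial>M))"
    by (simp add: power2_eq_square sum_product Bochner_Integration.integral_sum
        integrable_grid_increment_product[OF h] Bochner_Integration.integrable_sum)
  also have "\<dots> \<le> (\<Sum>j\<in>J. \<Sum>l\<in>J. (L * h)^2 + (if j = l then L * h else 0))"
    by (intro sum_mono grid_increment_product_integral_le[OF h])
  also have "\<dots> = (real (card J) * (L * h))^2 + real (card J) * (L * h)"
    using J by (simp add: sum.distrib power2_eq_square algebra_simps)
  finally show ?thesis .
qed

lemma grid_variation_tail_le:
  assumes J: "finite J" and h: "0 \<le> h" and c: "0 < c"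
  shows "measure M {\<omega>\<in>space M. c \<le> (\<Sum>j\<in>J. grid_increment h j \<omega>)}
       \<le> ((real (card J) * (L * h))^2 + real (card J) * (L * h)) / c^2"
proof -
  let ?V = "\<lambda>\<omega>. \<Sum>j\<in>J. grid_increment h j \<omega>"
  have integrable_sq: "integrable M (\<lambda>\<omega>. (?V \<omega>)^2)"
    by (simp add: power2_eq_square sum_product Bochner_Integration.integrable_sum
        integrable_grid_increment_product[OF h])
  have "{\<omega>\<in>space M. c \<le> ?V \<omega>} \<subseteq> {\<omega>\<in>space M. c^2 \<le> (?V \<omega>)^2}"
    using c by (auto intro: power_mono)
  then have "measure M {\<omega>\<in>space M. c \<le> ?V \<omega>} \<le> measure M {\<omega>\<in>space M. c^2 \<le> (?V \<omega>)^2}"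
    using borel_measurable_integrable[OF integrable_sq]
    by (intro P.finite_measure_mono) (auto simp: borel_measurable_iff_ge)
  also have "\<dots> \<le> (\<integral>\<omega>. (?V \<omega>)^2 \<partial>M) / c^2"
    by (rule integral_Markov_inequality_measure[OF integrable_sq sets.top]) (use c in auto)
  also have "\<dots> \<le> ((real (card J) * (L * h))^2 + real (card J) * (L * h)) / c^2"
    using c by (intro divide_right_mono grid_variation_second_moment_le[OF J h]) auto
  finally show ?thesis .
qed

end

section \<open>Oscillations of a right-continuous step path on dyadic grids\<close>

lemma nat_ceiling_grid_bounds:
  fixes t h :: real
  assumes t: "0 \<le> t" and h: "0 < h"
  shows "t \<le> real (nat \<lceil>t / h\<rceil>) * h" and "real (nat \<lceil>t / h\<rceil>) * h < t + h"
proof -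
  have k: "real (nat \<lceil>t / h\<rceil>) = of_int \<lceil>t / h\<rceil>" using t h by simp
  have "t / h * h \<le> of_int \<lceil>t / h\<rceil> * h"
    using le_of_int_ceiling h by (intro mult_right_mono) auto
  then show "t \<le> real (nat \<lceil>t / h\<rceil>) * h" unfolding k using h by simp
  have "of_int \<lceil>t / h\<rceil> * h < (t / h + 1) * h"
    using ceiling_correct[of "t / h"] h by (intro mult_strict_right_mono) auto
  then show "real (nat \<lceil>t / h\<rceil>) * h < t + h" unfolding k using h by (simp add: distrib_right)
qed

lemma abs_diff_le_sum_abs_increments:
  fixes f :: "nat \<Rightarrow> real"
  assumes "m \<le> n"
  shows "\<bar>f n - f m\<bar> \<le> (\<Sum>j\<in>{m..<n}. \<bar>f (Suc j) - f j\<bar>)"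
  using sum_abs[of "\<lambda>j. f (Suc j) - f j" "{m..<n}"] sum_Suc_diff'[OF assms, of f] by simp

lemma grid_variation_captures_oscillation:
  fixes g :: "real \<Rightarrow> real" and K :: nat
  assumes h: "0 < h" "h \<le> \<delta>" "real K * h = 2 * \<delta>"
    and ts: "0 \<le> t" "t \<le> s" "s \<le> T" "s - t \<le> \<delta>"
    and const_t: "\<And>u. t \<le> u \<Longrightarrow> u < t + h \<Longrightarrow> g u = g t"
    and const_s: "\<And>u. s \<le> u \<Longrightarrow> u < s + h \<Longrightarrow> g u = g s"
  obtains b where "real b < T / (2 * \<delta>) + 1"
    and "\<bar>g s - g t\<bar> \<le> (\<Sum>j\<in>{b * K..<Suc (Suc b) * K}. \<bar>g (real (Suc j) * h) - g (real j * h)\<bar>)"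
proof -
  define kt where "kt = nat \<lceil>t / h\<rceil>"
  define ks where "ks = nat \<lceil>s / h\<rceil>"
  have kt: "t \<le> real kt * h" "real kt * h < t + h"
    unfolding kt_def using nat_ceiling_grid_bounds ts(1) h(1) by auto
  have ks: "s \<le> real ks * h" "real ks * h < s + h"
    unfolding ks_def using nat_ceiling_grid_bounds ts h(1) by auto
  have K_pos: "0 < K" using h by (cases K) auto
  have kt_ks: "kt \<le> ks"
    unfolding kt_def ks_def using ts h by (intro nat_mono ceiling_mono divide_right_mono) auto
  have "(real ks - real kt) * h < real K * h"
    using kt ks ts h by (simp add: algebra_simps)
  then have ks_lt: "ks < kt + K" using h(1) by simp
  define b where "b = kt div K"
  have b: "b * K \<le> kt" "kt < Suc b * K"
    unfolding b_def mult_Suc using div_mult_mod_eq[of kt K] mod_less_divisor[OF K_pos, of kt]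
    by linarith+
  have "real (b * K) \<le> real kt" using b(1) by (simp only: of_nat_le_iff)
  then have "real (b * K) * h \<le> real kt * h" using h by (intro mult_right_mono) auto
  moreover have "real b * (2 * \<delta>) = real (b * K) * h" using h(3) by (simp add: mult.assoc)
  ultimately have "real b * (2 * \<delta>) < T + 2 * \<delta>" using kt ts h by linarith
  then have b_lt: "real b < T / (2 * \<delta>) + 1" using h by (simp add: field_simps)
  have "\<bar>g s - g t\<bar> = \<bar>g (real ks * h) - g (real kt * h)\<bar>"
    using const_t[OF kt] const_s[OF ks] by simp
  also have "\<dots> \<le> (\<Sum>j\<in>{kt..<ks}. \<bar>g (real (Suc j) * h) - g (real j * h)\<bar>)"
    using abs_diff_le_sum_abs_increments[OF kt_ks, of "\<lambda>j. g (real j * h)"] by simp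
  also have "\<dots> \<le> (\<Sum>j\<in>{b * K..<Suc (Suc b) * K}. \<bar>g (real (Suc j) * h) - g (real j * h)\<bar>)"
    using b ks_lt by (intro sum_mono2) auto
  finally show ?thesis using b_lt that by blast
qed

lemma grid_block_captures_oscillation:
  fixes g :: "real \<Rightarrow> real" and K :: nat
  assumes h: "0 < h" "h \<le> \<delta>" "real K * h = 2 * \<delta>"
    and ts: "0 \<le> t" "t \<le> s" "s \<le> T" "s - t \<le> \<delta>" and osc: "2 * c < \<bar>g s - g t\<bar>"
    and const_t: "\<And>u. t \<le> u \<Longrightarrow> u < t + h \<Longrightarrow> g u = g t"
    and const_s: "\<And>u. s \<le> u \<Longrightarrow> u < s + h \<Longrightarrow> g u = g s"
  shows "\<exists>b. real b < T / (2 * \<delta>) + 2 \<and>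
           c \<le> (\<Sum>j\<in>{b * K..<Suc b * K}. \<bar>g (real (Suc j) * h) - g (real j * h)\<bar>)"
proof -
  define v where "v j = \<bar>g (real (Suc j) * h) - g (real j * h)\<bar>" for j
  obtain b where b: "real b < T / (2 * \<delta>) + 1"
    and le: "\<bar>g s - g t\<bar> \<le> (\<Sum>j\<in>{b * K..<Suc (Suc b) * K}. v j)"
    unfolding v_def by (rule grid_variation_captures_oscillation[OF h ts const_t const_s])
  have "(\<Sum>j\<in>{b * K..<Suc (Suc b) * K}. v j)
      = (\<Sum>j\<in>{b * K..<Suc b * K}. v j) + (\<Sum>j\<in>{Suc b * K..<Suc (Suc b) * K}. v j)"
    by (rule sum.atLeastLessThan_concat[symmetric]) auto
  then have "c \<le> (\<Sum>j\<in>{b * K..<Suc b * K}. v j) \<or> c \<le> (\<Sum>j\<in>{Suc b * K..<Suc (Suc b) * K}. v j)"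
    using osc le by linarith
  then have "\<exists>b. real b < T / (2 * \<delta>) + 2 \<and> c \<le> (\<Sum>j\<in>{b * K..<Suc b * K}. v j)"
  proof (elim disjE)
    assume "c \<le> (\<Sum>j\<in>{b * K..<Suc b * K}. v j)"
    then show ?thesis using b by (intro exI[of _ b]) simp
  next
    assume "c \<le> (\<Sum>j\<in>{Suc b * K..<Suc (Suc b) * K}. v j)"
    then show ?thesis using b by (intro exI[of _ "Suc b"]) simp
  qed
  then show ?thesis unfolding v_def .
qed

lemma cadlag_step_right_constant:
  assumes "cadlag_step p" "0 \<le> t"
  obtains e where "0 < e" "\<And>u. t \<le> u \<Longrightarrow> u < t + e \<Longrightarrow> p u = p t"
proof -
  obtain e where e: "0 < e" "\<forall>u\<in>{t..<t + e}. p u = p t"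
    using conjunct1[OF assms(1)[unfolded cadlag_step_def, rule_format, OF assms(2)]] by blast
  show ?thesis
  proof (rule that[OF e(1)])
    fix u assume "t \<le> u" "u < t + e"
    then show "p u = p t" by (intro e(2)[rule_format]) simp
  qed
qed

lemma cadlag_oscillation_seen_on_dyadic_grids:
  fixes p :: "real \<Rightarrow> 's" and \<phi> :: "'s \<Rightarrow> real"
  assumes p: "cadlag_step p" and \<delta>: "0 < \<delta>"
    and ts: "t \<in> {0..T}" "s \<in> {0..T}" "\<bar>t - s\<bar> \<le> \<delta>" "2 * c < \<bar>\<phi> (p t) - \<phi> (p s)\<bar>"
  shows "\<exists>m0. \<forall>m\<ge>m0. \<exists>b. real b < T / (2 * \<delta>) + 2 \<and>
           c \<le> (\<Sum>j\<in>{b * 2 ^ m..<Suc b * 2 ^ m}.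
             \<bar>\<phi> (p (real (Suc j) * (2 * \<delta> / 2 ^ m))) - \<phi> (p (real j * (2 * \<delta> / 2 ^ m)))\<bar>)"
proof -
  obtain t1 s1 where ts1: "0 \<le> t1" "t1 \<le> s1" "s1 \<le> T" "s1 - t1 \<le> \<delta>"
    and osc: "2 * c < \<bar>\<phi> (p s1) - \<phi> (p t1)\<bar>"
  proof (cases "t \<le> s")
    case True
    then show ?thesis using that[of t s] ts by (auto simp: abs_minus_commute)
  next
    case False
    then show ?thesis using that[of s t] ts by auto
  qed
  obtain e1 where e1: "0 < e1" "\<And>u. t1 \<le> u \<Longrightarrow> u < t1 + e1 \<Longrightarrow> p u = p t1"
    using cadlag_step_right_constant[OF p ts1(1)] by blast
  have "0 \<le> s1" using ts1 by linarith
  then obtain e2 where e2: "0 < e2" "\<And>u. s1 \<le> u \<Longrightarrow> u < s1 + e2 \<Longrightarrow> p u = p s1"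
    using cadlag_step_right_constant[OF p] by blast
  define \<eta> where "\<eta> = min (min e1 e2) \<delta>"
  have \<eta>: "0 < \<eta>" unfolding \<eta>_def using e1 e2 \<delta> by simp
  have "\<exists>n. 2 * \<delta> / \<eta> < (2::real) ^ n" by (rule real_arch_pow) simp
  then obtain m0 where m0: "2 * \<delta> / \<eta> < 2 ^ m0" ..
  show ?thesis
  proof (rule exI[of _ m0], intro allI impI)
    fix m :: nat assume "m0 \<le> m"
    define h where "h = 2 * \<delta> / 2 ^ m"
    have "(2::real) ^ m0 \<le> 2 ^ m" using \<open>m0 \<le> m\<close> by (intro power_increasing) auto
    then have "2 * \<delta> / \<eta> < 2 ^ m" using m0 by linarith
    then have "h < \<eta>" using \<eta> unfolding h_def by (simp add: field_simps)
    then have h: "0 < h" "h \<le> \<delta>" "real (2 ^ m) * h = 2 * \<delta>"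
      using \<delta> unfolding h_def \<eta>_def by auto
    have const_t: "\<phi> (p u) = \<phi> (p t1)" if "t1 \<le> u" "u < t1 + h" for u
      using e1(2)[of u] that \<open>h < \<eta>\<close> by (simp add: \<eta>_def)
    have const_s: "\<phi> (p u) = \<phi> (p s1)" if "s1 \<le> u" "u < s1 + h" for u
      using e2(2)[of u] that \<open>h < \<eta>\<close> by (simp add: \<eta>_def)
    show "\<exists>b. real b < T / (2 * \<delta>) + 2 \<and>
           c \<le> (\<Sum>j\<in>{b * 2 ^ m..<Suc b * 2 ^ m}.
             \<bar>\<phi> (p (real (Suc j) * (2 * \<delta> / 2 ^ m))) - \<phi> (p (real j * (2 * \<delta> / 2 ^ m)))\<bar>)"
      unfolding h_def[symmetric]
      by (rule grid_block_captures_oscillation[OF h ts1 osc const_t const_s])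
  qed
qed

lemma (in finite_measure) measure_Union_Inter_le:
  fixes A :: "nat \<Rightarrow> 'a set"
  assumes sets_A: "\<And>m. A m \<in> sets M" and A_le: "\<And>m. measure M (A m) \<le> q"
  shows "measure M (\<Union>m0. \<Inter>m\<in>{m0..}. A m) \<le> q"
proof (rule LIMSEQ_le_const2)
  show "(\<lambda>m0. measure M (\<Inter>m\<in>{m0..}. A m)) \<longlonglongrightarrow> measure M (\<Union>m0. \<Inter>m\<in>{m0..}. A m)"
    by (rule finite_Lim_measure_incseq) (auto simp: incseq_def intro: sets_A)
  show "\<exists>N. \<forall>m0\<ge>N. measure M (\<Inter>m\<in>{m0..}. A m) \<le> q"
  proof (intro exI allI impI)
    fix m0 :: nat
    have "measure M (\<Inter>m\<in>{m0..}. A m) \<le> measure M (A m0)"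
      by (rule finite_measure_mono) (auto intro: sets_A)
    then show "measure M (\<Inter>m\<in>{m0..}. A m) \<le> q" using A_le[of m0] by linarith
  qed
qed

lemma outer_prob_le:
  assumes "B \<in> sets M" "A \<inter> space M \<subseteq> B"
  shows "outer_prob M A \<le> measure M B"
  unfolding outer_prob_def
proof (rule cInf_lower)
  show "measure M B \<in> {measure M B' | B'. B' \<in> sets M \<and> A \<inter> space M \<subseteq> B'}"
    using assms by blast
  show "bdd_below {measure M B' | B'. B' \<in> sets M \<and> A \<inter> space M \<subseteq> B'}"
    by (rule bdd_belowI[where m=0]) auto
qed

lemma outer_prob_nonneg: "0 \<le> outer_prob M A"
  unfolding outer_prob_def
proof (rule cInf_greatest)
  have "measure M (space M) \<in> {measure M B | B. B \<in> sets M \<and> A \<inter> space M \<subseteq> B}" by blast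
  then show "{measure M B | B. B \<in> sets M \<and> A \<inter> space M \<subseteq> B} \<noteq> {}" by blast
qed auto

context unit_jump_observable
begin

definition dyadic_block_variation :: "real \<Rightarrow> nat \<Rightarrow> nat \<Rightarrow> 'a \<Rightarrow> real" where
  "dyadic_block_variation \<delta> m b \<omega> =
     (\<Sum>j\<in>{b * 2 ^ m..<Suc b * 2 ^ m}. grid_increment (2 * \<delta> / 2 ^ m) j \<omega>)"

lemma sets_dyadic_block_variation_ge:
  assumes "0 < \<delta>"
  shows "{\<omega>\<in>space M. c \<le> dyadic_block_variation \<delta> m b \<omega>} \<in> sets M"
proof -
  have "dyadic_block_variation \<delta> m b \<in> borel_measurable M"
    unfolding dyadic_block_variation_def using assms
    by (intro borel_measurable_sum measurable_grid_increment) simp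
  then show ?thesis unfolding borel_measurable_iff_ge by blast
qed

lemma prob_dyadic_block_variation_ge_le:
  assumes \<delta>: "0 < \<delta>" and c: "0 < c"
  shows "measure M {\<omega>\<in>space M. \<exists>b<n. c \<le> dyadic_block_variation \<delta> m b \<omega>}
       \<le> real n * (((2 * L * \<delta>)^2 + 2 * L * \<delta>) / c^2)"
proof -
  let ?J = "\<lambda>b. {b * 2 ^ m..<Suc b * 2 ^ m}" and ?h = "2 * \<delta> / 2 ^ m"
  have card_J: "real (card (?J b)) * (L * ?h) = 2 * L * \<delta>" for b by (simp add: field_simps)
  have "measure M {\<omega>\<in>space M. \<exists>b<n. c \<le> dyadic_block_variation \<delta> m b \<omega>}
      = measure M (\<Union>b<n. {\<omega>\<in>space M. c \<le> dyadic_block_variation \<delta> m b \<omega>})"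
    by (rule arg_cong[where f = "measure M"]) auto
  also have "\<dots> \<le> (\<Sum>b<n. measure M {\<omega>\<in>space M. c \<le> dyadic_block_variation \<delta> m b \<omega>})"
    using sets_dyadic_block_variation_ge[OF \<delta>] by (intro measure_UNION_le) auto
  also have "\<dots> \<le> (\<Sum>b<n. ((2 * L * \<delta>)^2 + 2 * L * \<delta>) / c^2)"
  proof (intro sum_mono)
    fix b
    show "measure M {\<omega>\<in>space M. c \<le> dyadic_block_variation \<delta> m b \<omega>} \<le> ((2 * L * \<delta>)^2 + 2 * L * \<delta>) / c^2"
      using grid_variation_tail_le[of "?J b" ?h c] \<delta> c
      unfolding dyadic_block_variation_def card_J by simp
  qed
  finally show ?thesis by simp
qed

lemma oscillation_event_subset:
  assumes \<delta>: "0 < \<delta>" and n: "T / (2 * \<delta>) + 2 \<le> real n"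
  shows "{\<omega>\<in>space M. \<exists>t\<in>{0..T}. \<exists>s\<in>{0..T}. \<bar>t - s\<bar> \<le> \<delta> \<and> 2 * c < \<bar>\<phi> (X t \<omega>) - \<phi> (X s \<omega>)\<bar>}
       \<subseteq> {\<omega>\<in>space M. \<not> cadlag_step (\<lambda>t. X t \<omega>)}
         \<union> (\<Union>m0. \<Inter>m\<in>{m0..}. {\<omega>\<in>space M. \<exists>b<n. c \<le> dyadic_block_variation \<delta> m b \<omega>})"
proof
  fix \<omega> assume \<omega>: "\<omega> \<in> {\<omega>\<in>space M. \<exists>t\<in>{0..T}. \<exists>s\<in>{0..T}. \<bar>t - s\<bar> \<le> \<delta> \<and>
    2 * c < \<bar>\<phi> (X t \<omega>) - \<phi> (X s \<omega>)\<bar>}"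
  show "\<omega> \<in> {\<omega>\<in>space M. \<not> cadlag_step (\<lambda>t. X t \<omega>)}
      \<union> (\<Union>m0. \<Inter>m\<in>{m0..}. {\<omega>\<in>space M. \<exists>b<n. c \<le> dyadic_block_variation \<delta> m b \<omega>})"
  proof (cases "cadlag_step (\<lambda>t. X t \<omega>)")
    case True
    from \<omega> obtain t s where "t \<in> {0..T}" "s \<in> {0..T}" "\<bar>t - s\<bar> \<le> \<delta>"
      "2 * c < \<bar>\<phi> (X t \<omega>) - \<phi> (X s \<omega>)\<bar>" by blast
    then have "\<exists>m0. \<forall>m\<ge>m0. \<exists>b. real b < T / (2 * \<delta>) + 2 \<and> c \<le> dyadic_block_variation \<delta> m b \<omega>"
      unfolding dyadic_block_variation_def grid_increment_def
      by (rule cadlag_oscillation_seen_on_dyadic_grids[OF True \<delta>])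
    then obtain m0
      where m0: "\<forall>m\<ge>m0. \<exists>b. real b < T / (2 * \<delta>) + 2 \<and> c \<le> dyadic_block_variation \<delta> m b \<omega>" ..
    have "\<exists>b<n. c \<le> dyadic_block_variation \<delta> m b \<omega>" if m_ge: "m0 \<le> m" for m
    proof -
      obtain b where "real b < T / (2 * \<delta>) + 2" "c \<le> dyadic_block_variation \<delta> m b \<omega>"
        using m0[rule_format, OF m_ge] by blast
      moreover from this(1) have "b < n" using n by linarith
      ultimately show ?thesis by blast
    qed
    then have "\<omega> \<in> (\<Inter>m\<in>{m0..}. {\<omega>\<in>space M. \<exists>b<n. c \<le> dyadic_block_variation \<delta> m b \<omega>})"
      using \<omega> by blast
    then show ?thesis by blast
  qed (use \<omega> in auto)
qed

lemma oscillation_outer_prob_le: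
  assumes \<delta>: "0 < \<delta>" and c: "0 < c" and T: "0 \<le> T"
  shows "outer_prob M {\<omega>\<in>space M. \<exists>t\<in>{0..T}. \<exists>s\<in>{0..T}. \<bar>t - s\<bar> \<le> \<delta> \<and>
             2 * c < \<bar>\<phi> (X t \<omega>) - \<phi> (X s \<omega>)\<bar>}
       \<le> (T / (2 * \<delta>) + 3) * (((2 * L * \<delta>)^2 + 2 * L * \<delta>) / c^2)"
    (is "outer_prob M ?E \<le> _ * ?q")
proof -
  define nb where "nb = nat \<lceil>T / (2 * \<delta>)\<rceil> + 2"
  define grid_event where
    "grid_event m = {\<omega>\<in>space M. \<exists>b<nb. c \<le> dyadic_block_variation \<delta> m b \<omega>}" for m
  have "real (nat \<lceil>T / (2 * \<delta>)\<rceil>) = of_int \<lceil>T / (2 * \<delta>)\<rceil>" using T \<delta> by simp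
  then have nb: "T / (2 * \<delta>) + 2 \<le> real nb" "real nb \<le> T / (2 * \<delta>) + 3"
    unfolding nb_def using le_of_int_ceiling[of "T / (2 * \<delta>)"] ceiling_correct[of "T / (2 * \<delta>)"]
    by simp_all
  have sets_grid: "grid_event m \<in> sets M" for m
  proof -
    have "grid_event m = (\<Union>b<nb. {\<omega>\<in>space M. c \<le> dyadic_block_variation \<delta> m b \<omega>})"
      unfolding grid_event_def by auto
    then show ?thesis using sets_dyadic_block_variation_ge[OF \<delta>] by auto
  qed
  have grid_event_le: "measure M (grid_event m) \<le> real nb * ?q" for m
    unfolding grid_event_def by (rule prob_dyadic_block_variation_ge_le[OF \<delta> c])
  obtain N where N: "{\<omega>\<in>space M. \<not> cadlag_step (\<lambda>t. X t \<omega>)} \<subseteq> N" "emeasure M N = 0" "N \<in> sets M"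
    using AE_E[OF AE_cadlag_step] by blast
  have "?E \<inter> space M \<subseteq> N \<union> (\<Union>m0. \<Inter>m\<in>{m0..}. grid_event m)"
    using oscillation_event_subset[OF \<delta> nb(1)] N(1) unfolding grid_event_def by blast
  then have "outer_prob M ?E \<le> measure M (N \<union> (\<Union>m0. \<Inter>m\<in>{m0..}. grid_event m))"
    by (rule outer_prob_le[rotated]) (use N(3) sets_grid in auto)
  also have "\<dots> \<le> measure M N + measure M (\<Union>m0. \<Inter>m\<in>{m0..}. grid_event m)"
    by (rule measure_Un_le) (use N(3) sets_grid in auto)
  also have "\<dots> \<le> real nb * ?q"
    using P.measure_Union_Inter_le[OF sets_grid grid_event_le] N(2) by (simp add: measure_def)
  also have "\<dots> \<le> (T / (2 * \<delta>) + 3) * ?q"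
    using nb(2) L_pos \<delta> by (intro mult_right_mono) auto
  finally show ?thesis .
qed

end

section \<open>The mean-field particle system\<close>

definition occupation :: "nat \<Rightarrow> 'x list \<Rightarrow> 'x \<Rightarrow> real" where
  "occupation N xs z = real (card {i. i < N \<and> xs ! i = z})"

lemma occupation_eq_sum: "occupation N xs z = (\<Sum>i<N. if xs ! i = z then 1 else 0)"
proof -
  have "{i. i < N \<and> xs ! i = z} = {i\<in>{..<N}. xs ! i = z}" by auto
  then have "occupation N xs z = real (card {i\<in>{..<N}. xs ! i = z})"
    unfolding occupation_def by simp
  also have "\<dots> = (\<Sum>i\<in>{i\<in>{..<N}. xs ! i = z}. 1)" by (simp only: real_of_card)
  also have "\<dots> = (\<Sum>i<N. if xs ! i = z then 1 else 0)" by (rule sum.inter_filter) simp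
  finally show ?thesis .
qed

lemma emp_eq_occupation: "emp N xs $ z = occupation N xs z / real N"
  unfolding emp_def occupation_def by simp

lemma occupation_sum: "(\<Sum>z\<in>UNIV. occupation N xs (z::'x::finite)) = real N"
proof -
  have "(\<Sum>z\<in>UNIV. occupation N xs z) = (\<Sum>i<N. \<Sum>z\<in>UNIV. if xs ! i = z then 1 else 0)"
    unfolding occupation_eq_sum by (rule sum.swap)
  then show ?thesis by simp
qed

lemma emp_in_prob_vecs:
  assumes "1 \<le> N"
  shows "emp N (xs :: 'x::finite list) \<in> prob_vecs"
  unfolding prob_vecs_def
proof (intro CollectI conjI allI)
  show "0 \<le> emp N xs $ z" for z unfolding emp_eq_occupation occupation_def by simp
  have "(\<Sum>z\<in>UNIV. emp N xs $ z) = (\<Sum>z\<in>UNIV. occupation N xs z) / real N"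
    unfolding emp_eq_occupation by (simp add: sum_divide_distrib)
  then show "(\<Sum>z\<in>UNIV. emp N xs $ z) = 1" using assms by (simp add: occupation_sum)
qed

lemma occupation_update:
  assumes "length xs = N" "i < N" "y \<noteq> xs ! i"
  shows "occupation N (xs[i := y]) z
       = occupation N xs z + (if z = y then 1 else 0) - (if z = xs ! i then 1 else 0)"
proof -
  have "occupation N (xs[i := y]) z - occupation N xs z
      = (\<Sum>j<N. (if xs[i := y] ! j = z then 1 else 0) - (if xs ! j = z then 1 else 0))"
    unfolding occupation_eq_sum by (simp add: sum_subtractf)
  also have "\<dots> = (\<Sum>j<N. if j = i then (if y = z then 1 else 0) - (if xs ! i = z then 1 else 0) else 0)"
    by (intro sum.cong refl) (use assms in auto)
  also have "\<dots> = (if y = z then 1 else 0) - (if xs ! i = z then 1 else 0)"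
    using assms by simp
  finally show ?thesis by auto
qed

lemma emp_update:
  assumes "length xs = N" "i < N" "y \<noteq> xs ! i"
  shows "emp N (xs[i := y]) = emp N xs + (axis y 1 - axis (xs ! i) 1) /\<^sub>R real N"
proof (rule vec_eq_iff[THEN iffD2], rule allI)
  fix z
  have "0 < real N" using assms by simp
  then show "emp N (xs[i := y]) $ z = (emp N xs + (axis y 1 - axis (xs ! i) 1) /\<^sub>R real N) $ z"
    unfolding emp_eq_occupation occupation_update[OF assms]
    by (simp add: emp_eq_occupation axis_def field_simps)
qed

lemma finite_configs: "finite (configs N :: ('x::finite) list set)"
proof -
  have "configs N = {xs :: 'x list. set xs \<subseteq> UNIV \<and> length xs = N}"
    unfolding configs_def by auto
  then show ?thesis using finite_lists_length_eq[of "UNIV :: 'x set" N] by simp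
qed

lemma gen_matrix_genL:
  "gen_matrix (genL K AN N) a b =
    (\<Sum>i<N. \<Sum>y\<in>UNIV. if y = a ! i then 0 else
       ((if a[i := y] = b then 1 else 0) - (if a = b then 1 else 0)) * rateQ K AN N (emp N a) (a ! i) y)"
  by (simp add: gen_matrix_def genL_def)

lemma gen_matrix_genL_off_diagonal_nonneg:
  assumes "\<And>i y. i < N \<Longrightarrow> y \<noteq> a ! i \<Longrightarrow> 0 \<le> rateQ K AN N (emp N a) (a ! i) y" and "a \<noteq> b"
  shows "0 \<le> gen_matrix (genL K AN N) a b"
  unfolding gen_matrix_genL using assms by (auto intro!: sum_nonneg)

lemma gen_matrix_genL_exit_rate_le:
  fixes a :: "'x::finite list"
  assumes a: "a \<in> configs N"
    and rate_le: "\<And>i y. i < N \<Longrightarrow> y \<noteq> a ! i \<Longrightarrow> rateQ K AN N (emp N a) (a ! i) y \<le> \<rho>"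
    and \<rho>: "0 \<le> \<rho>"
  shows "- gen_matrix (genL K AN N) a a \<le> real N * (real CARD('x) * \<rho>)"
proof -
  have "length a = N" using a by (simp add: configs_def)
  then have "a[i := y] \<noteq> a" if "i < N" "y \<noteq> a ! i" for i y
    using that by (metis nth_list_update_eq)
  then have "- gen_matrix (genL K AN N) a a =
      (\<Sum>i<N. \<Sum>y\<in>UNIV. if y = a ! i then 0 else rateQ K AN N (emp N a) (a ! i) y)"
    unfolding gen_matrix_genL sum_negf[symmetric] by (intro sum.cong refl) auto
  also have "\<dots> \<le> (\<Sum>i<N. \<Sum>y\<in>(UNIV::'x set). \<rho>)"
    by (intro sum_mono) (auto intro: rate_le \<rho>)
  finally show ?thesis by simp
qed

lemma gen_matrix_genL_row_sum:
  fixes a :: "'x::finite list"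
  assumes a: "a \<in> configs N"
  shows "(\<Sum>b\<in>configs N. gen_matrix (genL K AN N) a b) = 0"
proof -
  let ?F = "\<lambda>i y b. if y = a ! i then 0 else
    ((if a[i := y] = b then 1 else 0) - (if a = b then 1 else 0)) * rateQ K AN N (emp N a) (a ! i) y"
  have finite: "finite (configs N :: 'x list set)" by (rule finite_configs)
  have "(\<Sum>b\<in>configs N. ?F i y b) = 0" for i y
  proof (cases "y = a ! i")
    case False
    have "a[i := y] \<in> configs N" using a by (simp add: configs_def)
    then have "(\<Sum>b\<in>configs N. if a[i := y] = b then 1 else 0) = (1::real)"
      using finite by (simp add: sum.delta)
    moreover have "(\<Sum>b\<in>configs N. if a = b then 1 else 0) = (1::real)"
      using a finite by (simp add: sum.delta)
    moreover have "(\<Sum>b\<in>configs N. ?F i y b)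
        = ((\<Sum>b\<in>configs N. if a[i := y] = b then 1 else 0) - (\<Sum>b\<in>configs N. if a = b then 1 else 0))
          * rateQ K AN N (emp N a) (a ! i) y"
      using False by (simp only: if_False sum_distrib_right[symmetric] sum_subtractf)
    ultimately show ?thesis by simp
  qed simp
  moreover have "(\<Sum>b\<in>configs N. gen_matrix (genL K AN N) a b)
      = (\<Sum>i<N. \<Sum>y\<in>UNIV. \<Sum>b\<in>configs N. ?F i y b)"
    unfolding gen_matrix_genL by (subst sum.swap) (intro sum.cong refl, rule sum.swap)
  ultimately show ?thesis by simp
qed

lemma gen_matrix_genL_nonzero_imp_update:
  assumes "gen_matrix (genL K AN N) a b \<noteq> 0" "a \<noteq> b"
  shows "\<exists>i<N. \<exists>y. y \<noteq> a ! i \<and> b = a[i := y]"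
proof (rule ccontr)
  assume "\<not> ?thesis"
  then have "gen_matrix (genL K AN N) a b = 0"
    unfolding gen_matrix_genL using assms(2) by (intro sum.neutral ballI) auto
  then show False using assms(1) by simp
qed

section \<open>Uniform bounds on the jump rates\<close>

lemma norm_le_1_if_prob_vecs: "\<mu> \<in> prob_vecs \<Longrightarrow> norm (\<mu> :: real ^ 'x::finite) \<le> 1"
  using norm_le_l1_cart[of \<mu>] unfolding prob_vecs_def by simp

lemma prob_vecs_compact: "compact (prob_vecs :: (real ^ 'x::finite) set)"
proof -
  have "closed (prob_vecs :: (real ^ 'x) set)"
    unfolding prob_vecs_def
    by (intro closed_Collect_conj closed_Collect_all closed_Collect_le closed_Collect_eq
        continuous_intros continuous_on_component continuous_on_id)
  moreover have "bounded (prob_vecs :: (real ^ 'x) set)"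
    using norm_le_1_if_prob_vecs by (intro boundedI) blast
  ultimately show ?thesis by (simp add: compact_eq_bounded_closed)
qed

lemma prob_vecs_convex: "convex (prob_vecs :: (real ^ 'x::finite) set)"
  unfolding convex_def
proof (intro ballI allI impI)
  fix \<mu> \<nu> :: "real ^ 'x" and u v :: real
  assume "\<mu> \<in> prob_vecs" "\<nu> \<in> prob_vecs" "0 \<le> u" "0 \<le> v" "u + v = 1"
  then show "u *\<^sub>R \<mu> + v *\<^sub>R \<nu> \<in> prob_vecs"
    unfolding prob_vecs_def by (simp add: sum.distrib sum_distrib_left[symmetric])
qed

lemma C2_on_bounded_on_prob_vecs:
  fixes S :: "(real ^ 'x::finite) set" and f :: "real ^ 'x \<Rightarrow> real"
  assumes "prob_vecs \<subseteq> S" "C2_on S f"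
  shows "\<exists>B. \<forall>\<mu>\<in>prob_vecs. \<bar>f \<mu>\<bar> \<le> B"
proof -
  obtain f' where f': "\<forall>\<mu>\<in>S. (f has_derivative blinfun_apply (f' \<mu>)) (at \<mu>)"
    using assms(2) unfolding C2_on_def by blast
  have "continuous_on prob_vecs f"
  proof (rule continuous_at_imp_continuous_on, rule ballI)
    fix \<mu> :: "real ^ 'x" assume "\<mu> \<in> prob_vecs"
    then show "isCont f \<mu>" using assms(1) f' has_derivative_continuous by blast
  qed
  then have "bounded (f ` prob_vecs)"
    by (intro compact_imp_bounded compact_continuous_image prob_vecs_compact)
  then obtain B where "\<forall>y\<in>f ` prob_vecs. norm y \<le> B" by (meson bounded_iff)
  then show ?thesis by auto
qed

lemma C2_on_lipschitz_on_prob_vecs: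
  fixes S :: "(real ^ 'x::finite) set" and f :: "real ^ 'x \<Rightarrow> real"
  assumes "prob_vecs \<subseteq> S" "C2_on S f"
  shows "\<exists>B. \<forall>\<mu>\<in>prob_vecs. \<forall>\<nu>\<in>prob_vecs. \<bar>f \<nu> - f \<mu>\<bar> \<le> B * norm (\<nu> - \<mu>)"
proof -
  obtain f' f'' where f': "\<forall>\<mu>\<in>S. (f has_derivative blinfun_apply (f' \<mu>)) (at \<mu>)"
    and f'': "\<forall>\<mu>\<in>S. (f' has_derivative blinfun_apply (f'' \<mu>)) (at \<mu>)"
    using assms(2) unfolding C2_on_def by blast
  have "continuous_on prob_vecs f'"
  proof (rule continuous_at_imp_continuous_on, rule ballI)
    fix \<mu> :: "real ^ 'x" assume "\<mu> \<in> prob_vecs"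
    then show "isCont f' \<mu>" using assms(1) f'' has_derivative_continuous by blast
  qed
  then have "bounded (f' ` prob_vecs)"
    by (intro compact_imp_bounded compact_continuous_image prob_vecs_compact)
  then obtain B where B: "\<forall>y\<in>f' ` prob_vecs. norm y \<le> B" by (meson bounded_iff)
  have "\<bar>f \<nu> - f \<mu>\<bar> \<le> B * norm (\<nu> - \<mu>)" if \<mu>: "\<mu> \<in> prob_vecs" and \<nu>: "\<nu> \<in> prob_vecs" for \<mu> \<nu>
  proof -
    have "norm (f \<nu> - f \<mu>) \<le> B * norm (\<nu> - \<mu>)"
    proof (rule differentiable_bound[OF prob_vecs_convex _ _ \<nu> \<mu>])
      fix y :: "real ^ 'x" assume "y \<in> prob_vecs"
      then have "y \<in> S" using assms(1) by blast
      then show "(f has_derivative blinfun_apply (f' y)) (at y within prob_vecs)"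
        using f' has_derivative_at_withinI by blast
    next
      fix y :: "real ^ 'x" assume "y \<in> prob_vecs"
      then show "onorm (blinfun_apply (f' y)) \<le> B" using B by (simp add: norm_blinfun.rep_eq)
    qed
    then show ?thesis by simp
  qed
  then show ?thesis by blast
qed

lemma abs_mult_diff_le:
  fixes a b u v :: real
  shows "\<bar>a * u - b * v\<bar> \<le> \<bar>a - b\<bar> * \<bar>u\<bar> + \<bar>b\<bar> * \<bar>u - v\<bar>"
proof -
  have "\<bar>a * u - b * v\<bar> = \<bar>(a - b) * u + b * (u - v)\<bar>" by (simp add: algebra_simps)
  then show ?thesis by (metis abs_mult abs_triangle_ineq)
qed

lemma component_mult_lipschitz_le:
  fixes f :: "real ^ 'x::finite \<Rightarrow> real"
  assumes \<mu>: "\<mu> \<in> prob_vecs" and bound: "\<bar>f \<nu>\<bar> \<le> B"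
    and lip: "\<bar>f \<nu> - f \<mu>\<bar> \<le> B' * norm (\<nu> - \<mu>)"
  shows "\<bar>\<nu> $ z * f \<nu> - \<mu> $ z * f \<mu>\<bar> \<le> (\<bar>B\<bar> + \<bar>B'\<bar>) * norm (\<nu> - \<mu>)"
proof -
  let ?n = "norm (\<nu> - \<mu>)"
  have "\<bar>\<nu> $ z - \<mu> $ z\<bar> \<le> ?n" using component_le_norm_cart[of "\<nu> - \<mu>" z] by simp
  moreover have "\<bar>f \<nu>\<bar> \<le> \<bar>B\<bar>" using bound by linarith
  moreover have "\<bar>\<mu> $ z\<bar> \<le> 1"
    using norm_le_1_if_prob_vecs[OF \<mu>] component_le_norm_cart[of \<mu> z] by linarith
  moreover have "\<bar>f \<nu> - f \<mu>\<bar> \<le> \<bar>B'\<bar> * ?n"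
  proof -
    have "B' * ?n \<le> \<bar>B'\<bar> * ?n" by (intro mult_right_mono) auto
    then show ?thesis using lip by linarith
  qed
  ultimately have "\<bar>\<nu> $ z - \<mu> $ z\<bar> * \<bar>f \<nu>\<bar> + \<bar>\<mu> $ z\<bar> * \<bar>f \<nu> - f \<mu>\<bar> \<le> ?n * \<bar>B\<bar> + 1 * (\<bar>B'\<bar> * ?n)"
    by (intro add_mono mult_mono) auto
  moreover have "?n * \<bar>B\<bar> + 1 * (\<bar>B'\<bar> * ?n) = (\<bar>B\<bar> + \<bar>B'\<bar>) * ?n" by (simp add: algebra_simps)
  ultimately show ?thesis using abs_mult_diff_le[of "\<nu> $ z" "f \<nu>" "\<mu> $ z" "f \<mu>"] by linarith
qed

lemma energy_lipschitz_on_prob_vecs: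
  fixes K :: "'x::finite \<Rightarrow> real ^ 'x \<Rightarrow> real"
  assumes "\<exists>S. open S \<and> prob_vecs \<subseteq> S \<and> (\<forall>z. C2_on S (K z))"
  shows "\<exists>C. \<forall>\<mu>\<in>prob_vecs. \<forall>\<nu>\<in>prob_vecs. \<bar>energy K \<nu> - energy K \<mu>\<bar> \<le> C * norm (\<nu> - \<mu>)"
proof -
  obtain S :: "(real ^ 'x) set" where S: "prob_vecs \<subseteq> S" "\<forall>z. C2_on S (K z)"
    using assms by blast
  have "\<forall>z. \<exists>B. \<forall>\<mu>\<in>prob_vecs. \<forall>\<nu>\<in>prob_vecs. \<bar>K z \<nu> - K z \<mu>\<bar> \<le> B * norm (\<nu> - \<mu>)"
    using C2_on_lipschitz_on_prob_vecs[OF S(1)] S(2) by blast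
  then obtain Bl where Bl: "\<forall>z. \<forall>\<mu>\<in>prob_vecs. \<forall>\<nu>\<in>prob_vecs. \<bar>K z \<nu> - K z \<mu>\<bar> \<le> Bl z * norm (\<nu> - \<mu>)"
    by metis
  have "\<forall>z. \<exists>B. \<forall>\<mu>\<in>prob_vecs. \<bar>K z \<mu>\<bar> \<le> B"
    using C2_on_bounded_on_prob_vecs[OF S(1)] S(2) by blast
  then obtain Bk where Bk: "\<forall>z. \<forall>\<mu>\<in>prob_vecs. \<bar>K z \<mu>\<bar> \<le> Bk z"
    by metis
  have "\<bar>energy K \<nu> - energy K \<mu>\<bar> \<le> (\<Sum>z\<in>UNIV. \<bar>Bk z\<bar> + \<bar>Bl z\<bar>) * norm (\<nu> - \<mu>)"
    if \<mu>: "\<mu> \<in> prob_vecs" and \<nu>: "\<nu> \<in> prob_vecs" for \<mu> \<nu>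
  proof -
    have "\<bar>energy K \<nu> - energy K \<mu>\<bar> \<le> (\<Sum>z\<in>UNIV. \<bar>\<nu> $ z * K z \<nu> - \<mu> $ z * K z \<mu>\<bar>)"
      unfolding energy_def sum_subtractf[symmetric] by (rule sum_abs)
    also have "\<dots> \<le> (\<Sum>z\<in>UNIV. (\<bar>Bk z\<bar> + \<bar>Bl z\<bar>) * norm (\<nu> - \<mu>))"
      using Bk Bl \<mu> \<nu> by (intro sum_mono component_mult_lipschitz_le) auto
    finally show ?thesis by (simp add: sum_distrib_right)
  qed
  then show ?thesis by blast
qed

lemma lipschitz_matrices_bounded_on_prob_vecs:
  fixes A :: "real ^ 'x::finite \<Rightarrow> 'x \<Rightarrow> 'x \<Rightarrow> real"
  assumes "\<exists>C. \<forall>\<mu>\<in>prob_vecs. \<forall>\<nu>\<in>prob_vecs. \<forall>y z. \<bar>A \<mu> y z - A \<nu> y z\<bar> \<le> C * norm (\<mu> - \<nu>)"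
  shows "\<exists>B\<ge>0. \<forall>\<mu>\<in>prob_vecs. \<forall>y z. A \<mu> y z \<le> B"
proof -
  obtain C where C: "\<forall>\<mu>\<in>prob_vecs. \<forall>\<nu>\<in>prob_vecs. \<forall>y z. \<bar>A \<mu> y z - A \<nu> y z\<bar> \<le> C * norm (\<mu> - \<nu>)"
    using assms by blast
  define \<mu>0 :: "real ^ 'x" where "\<mu>0 = (\<chi> z. 1 / real CARD('x))"
  have \<mu>0: "\<mu>0 \<in> prob_vecs" unfolding \<mu>0_def prob_vecs_def by simp
  define B0 where "B0 = (\<Sum>y\<in>UNIV. \<Sum>z\<in>UNIV. \<bar>A \<mu>0 y z\<bar>)"
  have "A \<mu> y z \<le> B0 + 2 * \<bar>C\<bar>" if \<mu>: "\<mu> \<in> prob_vecs" for \<mu> y z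
  proof -
    have "\<bar>A \<mu>0 y z\<bar> \<le> (\<Sum>z\<in>UNIV. \<bar>A \<mu>0 y z\<bar>)" by (rule member_le_sum) auto
    also have "\<dots> \<le> B0" unfolding B0_def by (rule member_le_sum) (auto intro: sum_nonneg)
    finally have A0: "\<bar>A \<mu>0 y z\<bar> \<le> B0" .
    have "norm (\<mu> - \<mu>0) \<le> 2"
      using norm_triangle_ineq4[of \<mu> \<mu>0] norm_le_1_if_prob_vecs[OF \<mu>] norm_le_1_if_prob_vecs[OF \<mu>0]
      by linarith
    have "\<bar>A \<mu> y z - A \<mu>0 y z\<bar> \<le> C * norm (\<mu> - \<mu>0)" using C \<mu> \<mu>0 by blast
    also have "\<dots> \<le> \<bar>C\<bar> * norm (\<mu> - \<mu>0)" by (intro mult_right_mono) auto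
    also have "\<dots> \<le> \<bar>C\<bar> * 2" using \<open>norm (\<mu> - \<mu>0) \<le> 2\<close> by (intro mult_left_mono) auto
    finally show ?thesis using A0 by linarith
  qed
  moreover have "0 \<le> B0 + 2 * \<bar>C\<bar>" unfolding B0_def by (simp add: sum_nonneg)
  ultimately show ?thesis by blast
qed

lemma rate_exponent_le:
  fixes K :: "'x::finite \<Rightarrow> real ^ 'x \<Rightarrow> real"
  assumes C: "\<forall>\<mu>\<in>prob_vecs. \<forall>\<nu>\<in>prob_vecs. \<bar>energy K \<nu> - energy K \<mu>\<bar> \<le> C * norm (\<nu> - \<mu>)"
    and N: "1 \<le> N" and a: "length a = N" "i < N" "y \<noteq> a ! i"
  shows "- (real N / 2) * (energy K (emp N a + (axis y 1 - axis (a ! i) 1) /\<^sub>R real N)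
           - energy K (emp N a)) \<le> \<bar>C\<bar>"
proof -
  let ?\<mu> = "emp N a" and ?\<nu> = "emp N (a[i := y])"
  have \<nu>: "?\<nu> = ?\<mu> + (axis y 1 - axis (a ! i) 1) /\<^sub>R real N" by (rule emp_update[OF a])
  have N_pos: "0 < real N" using N by simp
  have "norm (axis y 1 - axis (a ! i) 1 :: real ^ 'x) \<le> 2"
    using norm_triangle_ineq4[of "axis y 1 :: real ^ 'x" "axis (a ! i) 1"] by (simp add: norm_axis_1)
  moreover have "norm (?\<nu> - ?\<mu>) = norm (axis y 1 - axis (a ! i) 1 :: real ^ 'x) / real N"
    unfolding \<nu> using N_pos by (simp add: divide_inverse mult.commute)
  ultimately have n: "norm (?\<nu> - ?\<mu>) \<le> 2 / real N"
    using N_pos by (simp add: divide_right_mono)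
  have "\<bar>energy K ?\<nu> - energy K ?\<mu>\<bar> \<le> C * norm (?\<nu> - ?\<mu>)"
    using C emp_in_prob_vecs[OF N] by blast
  also have "\<dots> \<le> \<bar>C\<bar> * norm (?\<nu> - ?\<mu>)" by (intro mult_right_mono) auto
  also have "\<dots> \<le> \<bar>C\<bar> * (2 / real N)" using n by (intro mult_left_mono) auto
  finally have "\<bar>energy K ?\<nu> - energy K ?\<mu>\<bar> \<le> \<bar>C\<bar> * (2 / real N)" .
  then have "real N / 2 * \<bar>energy K ?\<nu> - energy K ?\<mu>\<bar> \<le> \<bar>C\<bar>"
    using N_pos by (simp add: field_simps)
  moreover have "real N / 2 * (- (energy K ?\<nu> - energy K ?\<mu>))
      \<le> real N / 2 * \<bar>energy K ?\<nu> - energy K ?\<mu>\<bar>"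
    by (intro mult_left_mono) auto
  ultimately show ?thesis unfolding \<nu> by linarith
qed

lemma rateQ_uniformly_bounded:
  fixes K :: "'x::finite \<Rightarrow> real ^ 'x \<Rightarrow> real"
    and A :: "real ^ 'x \<Rightarrow> 'x \<Rightarrow> 'x \<Rightarrow> real"
    and AN :: "nat \<Rightarrow> real ^ 'x \<Rightarrow> 'x \<Rightarrow> 'x \<Rightarrow> real"
  assumes K_C2: "\<exists>S. open S \<and> prob_vecs \<subseteq> S \<and> (\<forall>z. C2_on S (K z))"
    and A_lip: "\<exists>C. \<forall>\<mu>\<in>prob_vecs. \<forall>\<nu>\<in>prob_vecs. \<forall>y z. \<bar>A \<mu> y z - A \<nu> y z\<bar> \<le> C * norm (\<mu> - \<nu>)"
    and AN_mat: "\<forall>N. \<forall>\<mu>\<in>prob_vecs. irreducible_matrix (AN N \<mu>) \<and> symmetric_matrix (AN N \<mu>) \<and> nonneg_matrix (AN N \<mu>)"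
    and AN_conv: "\<forall>e>0. \<exists>N0. \<forall>N\<ge>N0. \<forall>\<mu>\<in>prob_vecs. \<forall>y z. \<bar>AN N \<mu> y z - A \<mu> y z\<bar> < e"
  shows "\<exists>\<rho> N0. 0 \<le> \<rho> \<and> 1 \<le> N0 \<and> (\<forall>N\<ge>N0. \<forall>a\<in>configs N. \<forall>i<N. \<forall>y. y \<noteq> a ! i \<longrightarrow>
            0 \<le> rateQ K AN N (emp N a) (a ! i) y \<and> rateQ K AN N (emp N a) (a ! i) y \<le> \<rho>)"
proof -
  obtain C where C: "\<forall>\<mu>\<in>prob_vecs. \<forall>\<nu>\<in>prob_vecs. \<bar>energy K \<nu> - energy K \<mu>\<bar> \<le> C * norm (\<nu> - \<mu>)"
    using energy_lipschitz_on_prob_vecs[OF K_C2] by blast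
  obtain B where B: "0 \<le> B" "\<And>\<mu> y z. \<mu> \<in> prob_vecs \<Longrightarrow> A \<mu> y z \<le> B"
    using lipschitz_matrices_bounded_on_prob_vecs[OF A_lip] by blast
  obtain N1 where N1: "\<forall>N\<ge>N1. \<forall>\<mu>\<in>prob_vecs. \<forall>y z. \<bar>AN N \<mu> y z - A \<mu> y z\<bar> < 1"
    using AN_conv zero_less_one by blast
  have "0 \<le> rateQ K AN N (emp N a) (a ! i) y \<and> rateQ K AN N (emp N a) (a ! i) y \<le> exp \<bar>C\<bar> * (B + 1)"
    if N: "max N1 1 \<le> N" and a: "a \<in> configs N" and i: "i < N" and y: "y \<noteq> a ! i" for N a i y
  proof -
    have \<mu>: "emp N a \<in> prob_vecs" using N by (intro emp_in_prob_vecs) simp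
    have AN_nonneg: "0 \<le> AN N (emp N a) (a ! i) y"
      using AN_mat \<mu> unfolding nonneg_matrix_def by blast
    have "\<bar>AN N (emp N a) (a ! i) y - A (emp N a) (a ! i) y\<bar> < 1" using N1 N \<mu> by auto
    then have "AN N (emp N a) (a ! i) y \<le> B + 1" using B(2)[OF \<mu>, of "a ! i" y] by linarith
    moreover have "- (real N / 2) * (energy K (emp N a + (axis y 1 - axis (a ! i) 1) /\<^sub>R real N)
        - energy K (emp N a)) \<le> \<bar>C\<bar>"
      using a i y N by (intro rate_exponent_le[OF C]) (auto simp: configs_def)
    ultimately show ?thesis
      unfolding rateQ_def using AN_nonneg by (auto intro!: mult_mono)
  qed
  then show ?thesis
    using B(1) by (intro exI[of _ "exp \<bar>C\<bar> * (B + 1)"] exI[of _ "max N1 1"]) auto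
qed

section \<open>Tightness of the empirical measures\<close>

lemma particle_finite_generator:
  fixes K :: "'x::finite \<Rightarrow> real ^ 'x \<Rightarrow> real"
  assumes rates: "\<forall>a\<in>configs N. \<forall>i<N. \<forall>y. y \<noteq> a ! i \<longrightarrow>
      0 \<le> rateQ K AN N (emp N a) (a ! i) y \<and> rateQ K AN N (emp N a) (a ! i) y \<le> \<rho>"
    and \<rho>: "0 \<le> \<rho>" and N: "1 \<le> N"
  shows "finite_generator (configs N :: 'x list set) (gen_matrix (genL K AN N))
           (real N * (real CARD('x) * \<rho> + 1))"
proof
  let ?G = "gen_matrix (genL K AN N)"
  show "finite (configs N :: 'x list set)" by (rule finite_configs)
  show "0 < real N * (real CARD('x) * \<rho> + 1)" using N \<rho> by (simp add: add_nonneg_pos)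
  show "0 \<le> ?G a b" if "a \<in> configs N" "b \<in> configs N" "a \<noteq> b" for a b
    using that rates by (intro gen_matrix_genL_off_diagonal_nonneg) auto
  show "(\<Sum>b\<in>configs N. ?G a b) = 0" if "a \<in> configs N" for a
    using that by (rule gen_matrix_genL_row_sum)
  show "- ?G a a \<le> real N * (real CARD('x) * \<rho> + 1)" if a: "a \<in> configs N" for a
  proof -
    have "- ?G a a \<le> real N * (real CARD('x) * \<rho>)"
      using a rates \<rho> by (intro gen_matrix_genL_exit_rate_le) auto
    also have "\<dots> \<le> real N * (real CARD('x) * \<rho> + 1)" using N by (simp add: algebra_simps)
    finally show ?thesis .
  qed
qed

lemma particle_count_unit_jump_observable:
  fixes K :: "'x::finite \<Rightarrow> real ^ 'x \<Rightarrow> real" and x :: 'x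
  assumes rates: "\<forall>a\<in>configs N. \<forall>i<N. \<forall>y. y \<noteq> a ! i \<longrightarrow>
      0 \<le> rateQ K AN N (emp N a) (a ! i) y \<and> rateQ K AN N (emp N a) (a ! i) y \<le> \<rho>"
    and \<rho>: "0 \<le> \<rho>" and N: "1 \<le> N"
    and proc: "markov_jump_process M (configs N) (gen_matrix (genL K AN N)) X"
  shows "unit_jump_observable (configs N) (gen_matrix (genL K AN N)) (real N * (real CARD('x) * \<rho> + 1))
           M X (\<lambda>xs. occupation N xs x)"
proof -
  let ?S = "configs N :: 'x list set" and ?G = "gen_matrix (genL K AN N)"
    and ?L = "real N * (real CARD('x) * \<rho> + 1)"
  have generator: "finite_generator ?S ?G ?L" by (rule particle_finite_generator[OF rates \<rho> N])
  interpret finite_generator ?S ?G ?L by (rule generator)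
  have "unit_jumps (\<lambda>xs. occupation N xs x)"
    unfolding unit_jumps_def
  proof (intro ballI impI)
    fix a b assume a: "a \<in> ?S" and "b \<in> ?S" and jump: "jump_kernel a b \<noteq> 0"
    show "\<bar>occupation N b x - occupation N a x\<bar> \<le> 1"
    proof (cases "a = b")
      case False
      then have "?G a b \<noteq> 0" using jump by (simp add: jump_kernel_def)
      then obtain i y where "i < N" "y \<noteq> a ! i" "b = a[i := y]"
        using gen_matrix_genL_nonzero_imp_update[OF _ False] by blast
      with a show ?thesis by (simp add: occupation_update configs_def)
    qed simp
  qed
  then show ?thesis
    by (intro unit_jump_observable.intro markov_jump_chain.intro generator
        markov_jump_chain_axioms.intro proc unit_jump_observable_axioms.intro)
qed

lemma particle_oscillation_outer_prob_le:
  fixes K :: "'x::finite \<Rightarrow> real ^ 'x \<Rightarrow> real" and x :: 'x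
  assumes rates: "\<forall>a\<in>configs N. \<forall>i<N. \<forall>y. y \<noteq> a ! i \<longrightarrow>
      0 \<le> rateQ K AN N (emp N a) (a ! i) y \<and> rateQ K AN N (emp N a) (a ! i) y \<le> \<rho>"
    and \<rho>: "0 \<le> \<rho>" and N: "1 \<le> N"
    and proc: "markov_jump_process M (configs N) (gen_matrix (genL K AN N)) X"
    and \<delta>: "0 < \<delta>" and \<epsilon>: "0 < \<epsilon>" and T: "0 \<le> T"
    and N_large: "1 \<le> 2 * (real N * (real CARD('x) * \<rho> + 1)) * \<delta>"
  shows "outer_prob M {\<omega>\<in>space M. \<exists>t\<in>{0..T}. \<exists>s\<in>{0..T}. \<bar>t - s\<bar> \<le> \<delta> \<and>
             \<bar>emp N (X t \<omega>) $ x - emp N (X s \<omega>) $ x\<bar> > \<epsilon>}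
       \<le> (16 * T * \<delta> + 96 * \<delta>^2) * (real CARD('x) * \<rho> + 1)^2 / \<epsilon>^2"
proof -
  define r where "r = real CARD('x) * \<rho> + 1"
  define L where "L = real N * r"
  interpret unit_jump_observable "configs N" "gen_matrix (genL K AN N)" L M X "\<lambda>xs. occupation N xs x"
    unfolding L_def r_def by (rule particle_count_unit_jump_observable[OF rates \<rho> N proc])
  have N_pos: "0 < real N" using N by simp
  define c where "c = \<epsilon> * real N / 2"
  have "\<bar>emp N u $ x - emp N v $ x\<bar> > \<epsilon> \<longleftrightarrow> 2 * c < \<bar>occupation N u x - occupation N v x\<bar>" for u v
    unfolding emp_eq_occupation c_def diff_divide_distrib[symmetric] abs_divide
    using N_pos by (simp add: pos_less_divide_eq)
  then have "outer_prob M {\<omega>\<in>space M. \<exists>t\<in>{0..T}. \<exists>s\<in>{0..T}. \<bar>t - s\<bar> \<le> \<delta> \<and>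
             \<bar>emp N (X t \<omega>) $ x - emp N (X s \<omega>) $ x\<bar> > \<epsilon>}
      \<le> (T / (2 * \<delta>) + 3) * (((2 * L * \<delta>)^2 + 2 * L * \<delta>) / c^2)"
    using oscillation_outer_prob_le[OF \<delta> _ T, of c] \<epsilon> N_pos unfolding c_def by simp
  also have "\<dots> \<le> (T / (2 * \<delta>) + 3) * (2 * (2 * L * \<delta>)^2 / c^2)"
  proof -
    have "1 \<le> 2 * L * \<delta>" using N_large unfolding L_def r_def .
    then have "1 * (2 * L * \<delta>) \<le> (2 * L * \<delta>) * (2 * L * \<delta>)"
      by (intro mult_right_mono) auto
    then show ?thesis using \<delta> T
      by (intro mult_left_mono divide_right_mono) (auto simp: power2_eq_square)
  qed
  also have "\<dots> = (16 * T * \<delta> + 96 * \<delta>^2) * r^2 / \<epsilon>^2"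
    unfolding L_def c_def using \<delta> \<epsilon> N_pos by (simp add: field_simps power2_eq_square)
  finally show ?thesis unfolding r_def .
qed

lemma particle_oscillation_eventually_le:
  fixes K :: "'x::finite \<Rightarrow> real ^ 'x \<Rightarrow> real" and x :: 'x
    and M :: "nat \<Rightarrow> 'a measure" and X :: "nat \<Rightarrow> real \<Rightarrow> 'a \<Rightarrow> 'x list"
  assumes rates: "\<forall>N\<ge>N0. \<forall>a\<in>configs N. \<forall>i<N. \<forall>y. y \<noteq> a ! i \<longrightarrow>
      0 \<le> rateQ K AN N (emp N a) (a ! i) y \<and> rateQ K AN N (emp N a) (a ! i) y \<le> \<rho>"
    and \<rho>: "0 \<le> \<rho>" and N0: "1 \<le> N0"
    and proc: "\<forall>N\<ge>1. markov_jump_process (M N) (configs N) (gen_matrix (genL K AN N)) (X N)"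
    and \<delta>: "0 < \<delta>" and \<epsilon>: "0 < \<epsilon>" and T: "0 \<le> T"
  shows "eventually (\<lambda>N. outer_prob (M N) {\<omega>\<in>space (M N). \<exists>t\<in>{0..T}. \<exists>s\<in>{0..T}. \<bar>t - s\<bar> \<le> \<delta> \<and>
             \<bar>emp N (X N t \<omega>) $ x - emp N (X N s \<omega>) $ x\<bar> > \<epsilon>}
       \<le> (16 * T * \<delta> + 96 * \<delta>^2) * (real CARD('x) * \<rho> + 1)^2 / \<epsilon>^2) sequentially"
proof -
  define r where "r = real CARD('x) * \<rho> + 1"
  have r: "0 < r" unfolding r_def using \<rho> by (simp add: add_nonneg_pos)
  obtain N1 :: nat where N1: "1 / (2 * r * \<delta>) \<le> real N1" using real_arch_simple by blast
  show ?thesis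
    using eventually_ge_at_top[of "max N0 N1"]
  proof eventually_elim
    case (elim N)
    then have "1 / (2 * r * \<delta>) \<le> real N" using N1 by linarith
    then have "1 \<le> 2 * (real N * r) * \<delta>" using r \<delta> by (simp add: field_simps)
    with elim show ?case
      unfolding r_def using rates N0 proc
      by (intro particle_oscillation_outer_prob_le[OF _ \<rho> _ _ \<delta> \<epsilon> T]) auto
  qed
qed

lemma tendsto_limsup_zero_if_eventually_le:
  fixes p :: "nat \<Rightarrow> real \<Rightarrow> real" and g :: "real \<Rightarrow> real"
  assumes nonneg: "\<And>N \<delta>. 0 \<le> p N \<delta>"
    and le: "\<And>\<delta>. 0 < \<delta> \<Longrightarrow> eventually (\<lambda>N. p N \<delta> \<le> g \<delta>) sequentially"
    and g: "(g \<longlongrightarrow> 0) (at_right 0)"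
  shows "((\<lambda>\<delta>. limsup (\<lambda>N. ereal (p N \<delta>))) \<longlongrightarrow> 0) (at_right 0)"
proof (rule tendsto_sandwich[OF _ _ tendsto_const])
  show "\<forall>\<^sub>F \<delta> in at_right 0. 0 \<le> limsup (\<lambda>N. ereal (p N \<delta>))"
    using nonneg by (intro always_eventually allI le_Limsup) auto
  show "\<forall>\<^sub>F \<delta> in at_right 0. limsup (\<lambda>N. ereal (p N \<delta>)) \<le> ereal (g \<delta>)"
    using eventually_at_right_less[of 0]
    by eventually_elim (intro Limsup_bounded, use le in auto)
  show "((\<lambda>\<delta>. ereal (g \<delta>)) \<longlongrightarrow> 0) (at_right 0)"
    using g by (simp add: zero_ereal_def)
qed

theorem lemma3p11:
  fixes K :: "'x::finite \<Rightarrow> real ^ 'x \<Rightarrow> real"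
    and A :: "real ^ 'x \<Rightarrow> 'x \<Rightarrow> 'x \<Rightarrow> real"
    and AN :: "nat \<Rightarrow> real ^ 'x \<Rightarrow> 'x \<Rightarrow> 'x \<Rightarrow> real"
    and M :: "nat \<Rightarrow> 'a measure"
    and X :: "nat \<Rightarrow> real \<Rightarrow> 'a \<Rightarrow> 'x list"
    and x :: 'x and \<epsilon> T :: real
  assumes K_C2: "\<exists>S. open S \<and> prob_vecs \<subseteq> S \<and> (\<forall>z. C2_on S (K z))"
    and A_mat: "\<forall>\<mu>\<in>prob_vecs. irreducible_matrix (A \<mu>) \<and> symmetric_matrix (A \<mu>) \<and> nonneg_matrix (A \<mu>)"
    and A_lip: "\<exists>C. \<forall>\<mu>\<in>prob_vecs. \<forall>\<nu>\<in>prob_vecs. \<forall>y z. \<bar>A \<mu> y z - A \<nu> y z\<bar> \<le> C * norm (\<mu> - \<nu>)"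
    and AN_mat: "\<forall>N. \<forall>\<mu>\<in>prob_vecs. irreducible_matrix (AN N \<mu>) \<and> symmetric_matrix (AN N \<mu>) \<and> nonneg_matrix (AN N \<mu>)"
    and AN_conv: "\<forall>e>0. \<exists>N0. \<forall>N\<ge>N0. \<forall>\<mu>\<in>prob_vecs. \<forall>y z. \<bar>AN N \<mu> y z - A \<mu> y z\<bar> < e"
    and proc: "\<forall>N\<ge>1. markov_jump_process (M N) (configs N) (gen_matrix (genL K AN N)) (X N)"
    and eps: "\<epsilon> > 0"
    and T: "T \<ge> 0"
  shows "((\<lambda>\<delta>. limsup (\<lambda>N. ereal (outer_prob (M N)
            {\<omega>\<in>space (M N). \<exists>t\<in>{0..T}. \<exists>s\<in>{0..T}. \<bar>t - s\<bar> \<le> \<delta> \<and>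
               \<bar>emp N (X N t \<omega>) $ x - emp N (X N s \<omega>) $ x\<bar> > \<epsilon>})))
         \<longlongrightarrow> 0) (at_right 0)"
proof -
  obtain \<rho> N0 where \<rho>: "0 \<le> \<rho>" and N0: "1 \<le> N0"
    and rates: "\<forall>N\<ge>N0. \<forall>a\<in>configs N. \<forall>i<N. \<forall>y. y \<noteq> a ! i \<longrightarrow>
            0 \<le> rateQ K AN N (emp N a) (a ! i) y \<and> rateQ K AN N (emp N a) (a ! i) y \<le> \<rho>"
    using rateQ_uniformly_bounded[OF K_C2 A_lip AN_mat AN_conv] by blast
  let ?g = "\<lambda>\<delta>. (16 * T * \<delta> + 96 * \<delta>^2) * (real CARD('x) * \<rho> + 1)^2 / \<epsilon>^2"
  have "(?g \<longlongrightarrow> (16 * T * 0 + 96 * 0^2) * (real CARD('x) * \<rho> + 1)^2 / \<epsilon>^2) (at_right 0)"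
    by (intro tendsto_intros) (use eps in auto)
  then have g: "(?g \<longlongrightarrow> 0) (at_right 0)" by simp
  show ?thesis
    by (rule tendsto_limsup_zero_if_eventually_le[where g = ?g, OF outer_prob_nonneg
        particle_oscillation_eventually_le[OF rates \<rho> N0 proc _ eps T] g])
qed

end
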